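(* Let $n\ge1$, suppose $\lambda\ge\frac{n+2}{n}$ and $\gamma=\frac{n+2-\varepsilon}{2\lambda}$ for some $\varepsilon\in(0,1)$. Then the function $$u(x,t)=\Psi(x,t):=\int_{\mathbb{R}^n}\Phi(x-y,t)|y|^{-2\gamma}\,dy$$ is a $C^\infty$ positive solution of $u_t-\Delta u=0$ in $\mathbb{R}^n\times(0,\infty)$ such that $u\in L^\lambda(\mathbb{R}^n\times(0,T))$ for all $T>0$, $t^\gamma u(0,t)=u(0,1)$ for all $t>0$, and $t^\gamma u(x,t)$ is bounded between positive constants on the set $\{(x,t)\in\mathbb{R}^n\times(0,\infty):|x|<\sqrt t\}$.
   Context: $\Phi$ is the heat kernel: $\Phi(x,t)=(4\pi t)^{-n/2}e^{-|x|^2/(4t)}$ for $t>0$ and $\Phi(x,t)=0$ for $t\le0$. *)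

theory Defs
  imports "HOL-Analysis.Analysis"
begin

definition heat_kernel :: "real^'n \<Rightarrow> real \<Rightarrow> real" where
  "heat_kernel x t = (if t > 0
     then (4 * pi * t) powr (- real CARD('n) / 2) * exp (- (norm x)\<^sup>2 / (4 * t))
     else 0)"

definition Psi :: "real \<Rightarrow> real^'n \<Rightarrow> real \<Rightarrow> real" where
  "Psi \<gamma> x t = (\<integral>y. heat_kernel (x - y) t * norm y powr (- 2 * \<gamma>) \<partial>lborel)"

fun iter_dderiv :: "('a::real_normed_vector \<Rightarrow> real) \<Rightarrow> 'a list \<Rightarrow> 'a \<Rightarrow> real" where
  "iter_dderiv f [] = f"
| "iter_dderiv f (v # vs) = (\<lambda>p. frechet_derivative (iter_dderiv f vs) (at p) v)"

definition smooth_on :: "'a::real_normed_vector set \<Rightarrow> ('a \<Rightarrow> real) \<Rightarrow> bool" where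
  "smooth_on S f \<longleftrightarrow> (\<forall>vs. \<forall>p\<in>S. iter_dderiv f vs differentiable (at p))"

definition heat_op :: "((real^'n::finite) \<times> real \<Rightarrow> real) \<Rightarrow> (real^'n) \<times> real \<Rightarrow> real" where
  "heat_op u p = iter_dderiv u [(0, 1)] p
     - (\<Sum>i\<in>UNIV. iter_dderiv u [(axis i 1, 0), (axis i 1, 0)] p)"

end

(*
  With a = 2\<gamma> the solution is u(x,t) = \<integral> \<Phi>(x - y, t) |y|^-a dy, and \<lambda> \<ge> (n + 2)/n forces
  a < n, so the weight |y|^-a is locally integrable.  Every space-time derivative of \<Phi> is a
  polynomial in x, t and 1/t times \<Phi>, and near any t0 > 0 such a kernel is dominated by a
  Gaussian in y uniformly in (x, t).  A second-order Taylor bound therefore allows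
  differentiation under the integral sign as often as we like; this gives smoothness, and u
  solves the heat equation because \<Phi> does.

  The substitution y = sqrt t z gives u(x,t) = t^(-a/2) u(x / sqrt t, 1), while u(.,1) is
  positive, bounded and O(|\<xi>|^-a) at infinity.  This yields the identity at x = 0, the
  two-sided bound on |x| < sqrt t, and |u|^\<lambda> <= K t^(-a\<lambda>/2) for |x| <= sqrt t and
  |u|^\<lambda> <= K |x|^(-a\<lambda>) otherwise.  The integral of this majorant over R^n x (0,T) is
  finite precisely when n < a\<lambda> < n + 2, and here a\<lambda> = n + 2 - \<epsilon>.
*)

theory Submission
  imports Defs
begin

section \<open>Integrability of power weights\<close>

lemma dyadic_interval_ex:
  fixes r :: real
  assumes "1 \<le> r"
  shows "\<exists>k::nat. 2 ^ k \<le> r \<and> r < 2 ^ (k + 1)"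
proof -
  define k where "k = nat \<lfloor>log 2 r\<rfloor>"
  have "0 \<le> log 2 r" using assms by simp
  then have "real k \<le> log 2 r" "log 2 r < real k + 1" unfolding k_def by linarith+
  then have "2 powr real k \<le> r" "r < 2 powr (real k + 1)"
    using assms by (simp_all add: le_log_iff log_less_iff)
  then show ?thesis using assms by (intro exI[of _ k]) (simp add: powr_add powr_realpow)
qed

lemma sets_borel_cball [measurable]: "cball (c::'a::euclidean_space) r \<in> sets borel"
  by (simp add: borel_closed)

lemma ennreal_le_suminf: "(f :: nat \<Rightarrow> ennreal) i \<le> suminf f"
  using sum_le_suminf[OF summableI, of "{i}" f] by simp

lemma two_sided_norm_powr_le_dyadic_sum:
  fixes y :: "'a::euclidean_space" and a b :: real
  assumes "0 \<le> a" "0 \<le> b"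
  shows "ennreal (if norm y \<le> 1 then norm y powr -a else norm y powr -b)
    \<le> (\<Sum>k. ennreal (2 powr ((k + 1) * a)) * indicator (cball 0 (1 / 2 ^ k)) y)
      + (\<Sum>k. ennreal (2 powr (- k * b)) * indicator (cball 0 (2 ^ (k + 1))) y)"
proof (cases "norm y \<le> 1")
  case True
  show ?thesis
  proof (cases "y = 0")
    case False
    then have "1 \<le> 1 / norm y" using True by simp
    then obtain k :: nat where k: "2 ^ k \<le> 1 / norm y" "1 / norm y < 2 ^ (k + 1)"
      using dyadic_interval_ex by blast
    have "norm y powr -a = (1 / norm y) powr a"
      using False by (simp add: powr_minus_divide powr_divide)
    also have "\<dots> \<le> (2 ^ (k + 1)) powr a" using k assms by (intro powr_mono2) auto
    also have "\<dots> = 2 powr ((k + 1) * a)"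
      by (subst powr_realpow[symmetric]) (simp_all add: powr_powr)
    finally have "ennreal (norm y powr -a)
        \<le> ennreal (2 powr ((k + 1) * a)) * indicator (cball 0 (1 / 2 ^ k)) y"
      using k False by (simp add: ennreal_leI field_simps)
    also have "\<dots> \<le> (\<Sum>k. ennreal (2 powr ((k + 1) * a)) * indicator (cball 0 (1 / 2 ^ k)) y)"
      by (rule ennreal_le_suminf)
    finally show ?thesis using True by (simp add: add_increasing2)
  qed simp
next
  case False
  then obtain k :: nat where k: "2 ^ k \<le> norm y" "norm y < 2 ^ (k + 1)"
    using dyadic_interval_ex[of "norm y"] False by auto
  have "norm y powr -b \<le> (2 ^ k) powr -b" using k assms by (intro powr_mono2') auto
  also have "\<dots> = 2 powr (- k * b)" by (simp add: powr_powr powr_realpow[symmetric])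
  finally have "ennreal (norm y powr -b)
      \<le> ennreal (2 powr (- k * b)) * indicator (cball 0 (2 ^ (k + 1))) y"
    using k by (simp add: ennreal_leI)
  also have "\<dots> \<le> (\<Sum>k. ennreal (2 powr (- k * b)) * indicator (cball 0 (2 ^ (k + 1))) y)"
    by (rule ennreal_le_suminf)
  finally show ?thesis using False by (simp add: add_increasing)
qed

lemma nn_integral_two_sided_norm_powr_finite:
  fixes a b :: real
  assumes a: "0 \<le> a" "a < DIM('a)" and b: "DIM('a) < b"
  shows "(\<integral>\<^sup>+ y. ennreal (if norm y \<le> 1 then norm (y::'a::euclidean_space) powr -a
                         else norm y powr -b) \<partial>lborel) < \<infinity>"
proof -
  define n where "n = DIM('a)"
  define V where "V = unit_ball_vol (real n)"
  have V: "0 \<le> V" unfolding V_def by simp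
  have small: "ennreal (2 powr ((k + 1) * a)) * emeasure lborel (cball (0::'a) (1 / 2 ^ k))
      = ennreal (V * 2 powr a * (2 powr (a - n)) ^ k)" for k :: nat
  proof -
    have "(1 / 2 ^ k) ^ n = (2::real) powr (- (real k * n))"
      by (simp add: powr_realpow[symmetric] powr_powr power_one_over powr_minus_divide mult.commute)
    moreover have "2 powr ((k + 1) * a) * 2 powr (- (real k * n)) = 2 powr (a + (a - n) * k)"
      by (simp add: powr_add[symmetric] algebra_simps)
    moreover have "2 powr (a + (a - n) * k) = 2 powr a * (2 powr (a - n)) ^ k"
      by (simp add: powr_add powr_realpow[symmetric] powr_powr)
    ultimately show ?thesis
      using V by (simp add: emeasure_cball V_def n_def ennreal_mult[symmetric] mult_ac)
  qed
  have large: "ennreal (2 powr (- k * b)) * emeasure lborel (cball (0::'a) (2 ^ (k + 1)))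
      = ennreal (V * 2 powr n * (2 powr (n - b)) ^ k)" for k :: nat
  proof -
    have "(2 ^ (k + 1)) ^ n = (2::real) powr ((real k + 1) * n)"
      by (simp add: powr_realpow[symmetric] powr_powr powr_add[symmetric] algebra_simps)
    moreover have "2 powr (- k * b) * 2 powr ((real k + 1) * n) = 2 powr (n + (n - b) * k)"
      by (simp add: powr_add[symmetric] algebra_simps)
    moreover have "2 powr (n + (n - b) * k) = 2 powr n * (2 powr (n - b)) ^ k"
      by (simp add: powr_add powr_realpow[symmetric] powr_powr)
    ultimately show ?thesis
      using V by (simp add: emeasure_cball V_def n_def ennreal_mult[symmetric] mult_ac)
  qed
  have geometric: "(\<Sum>k. ennreal (C * q ^ k)) \<noteq> top" if "0 \<le> C" "0 \<le> q" "q < 1" for C q :: real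
    using that by (intro ennreal_suminf_neq_top summable_mult summable_geometric) auto
  have "(\<integral>\<^sup>+ y. ennreal (if norm y \<le> 1 then norm (y::'a) powr -a else norm y powr -b) \<partial>lborel)
    \<le> (\<integral>\<^sup>+ y. (\<Sum>k. ennreal (2 powr ((k + 1) * a)) * indicator (cball (0::'a) (1 / 2 ^ k)) y)
      + (\<Sum>k. ennreal (2 powr (- k * b)) * indicator (cball 0 (2 ^ (k + 1))) y) \<partial>lborel)"
    using a b by (intro nn_integral_mono two_sided_norm_powr_le_dyadic_sum) auto
  also have "\<dots> = (\<Sum>k. ennreal (2 powr ((k + 1) * a)) * emeasure lborel (cball (0::'a) (1 / 2 ^ k)))
     + (\<Sum>k. ennreal (2 powr (- k * b)) * emeasure lborel (cball (0::'a) (2 ^ (k + 1))))"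
    apply (subst nn_integral_add)
    apply measurable[1] apply measurable[1]
    apply (subst nn_integral_suminf, measurable)+
    apply (subst nn_integral_cmult_indicator, simp)+
    apply (rule refl)
    done
  also have "\<dots> = (\<Sum>k. ennreal (V * 2 powr a * (2 powr (a - n)) ^ k))
     + (\<Sum>k. ennreal (V * 2 powr n * (2 powr (n - b)) ^ k))"
    by (simp only: small large)
  also have "\<dots> < \<infinity>"
  proof -
    have "2 powr (a - n) < 2 powr 0" "2 powr (n - b) < 2 powr 0"
      using a b by (simp_all only: n_def powr_less_cancel_iff)
    then have "(\<Sum>k. ennreal (V * 2 powr a * (2 powr (a - n)) ^ k)) \<noteq> top"
      "(\<Sum>k. ennreal (V * 2 powr n * (2 powr (n - b)) ^ k)) \<noteq> top"
      using V by (simp_all add: geometric)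
    then show ?thesis by (simp add: less_top)
  qed
  finally show ?thesis .
qed

lemma one_plus_power_le_exp_square:
  fixes r c :: real
  assumes "0 \<le> r" "0 < c"
  shows "(1 + r) ^ m \<le> exp (m\<^sup>2 / (4 * c)) * exp (c * r\<^sup>2)"
proof -
  have "(1 + r) ^ m \<le> exp r ^ m"
    using assms by (intro power_mono) (auto simp: exp_ge_add_one_self)
  also have "\<dots> = exp (m * r)" by (simp add: exp_of_nat_mult)
  also have "\<dots> \<le> exp (m\<^sup>2 / (4 * c) + c * r\<^sup>2)"
  proof -
    have "0 \<le> (2 * c * r - m)\<^sup>2" by simp
    then have "4 * c * (m * r) \<le> 4 * c * (m\<^sup>2 / (4 * c) + c * r\<^sup>2)"
      using assms by (simp add: power2_eq_square algebra_simps)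
    then show ?thesis using assms by simp
  qed
  finally show ?thesis by (simp add: exp_add)
qed

lemma power_mult_exp_le_powr:
  fixes a c :: real
  assumes a: "0 \<le> a" and c: "0 < c"
  shows "\<exists>C. \<forall>r>0. (1 + r) ^ m * exp (- c * r\<^sup>2) \<le> C * r powr -a"
proof (intro exI allI impI)
  fix r :: real assume r: "0 < r"
  define N where "N = nat \<lceil>a\<rceil>"
  define E where "E = exp ((real (m + N))\<^sup>2 / (4 * c))"
  have "r powr a \<le> (1 + r) powr a" using r a by (intro powr_mono2) auto
  also have "\<dots> \<le> (1 + r) powr real N" using r a by (intro powr_mono) (auto simp: N_def)
  also have "\<dots> = (1 + r) ^ N" using r by (simp add: powr_realpow)
  finally have "(1 + r) ^ m * r powr a \<le> (1 + r) ^ (m + N)"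
    using r by (simp add: power_add mult_left_mono)
  also have "\<dots> \<le> E * exp (c * r\<^sup>2)"
    using one_plus_power_le_exp_square[of r c "m + N"] r c by (simp add: E_def)
  finally have "(1 + r) ^ m * r powr a * exp (- c * r\<^sup>2) * r powr -a \<le> E * exp (c * r\<^sup>2) * exp (- c * r\<^sup>2) * r powr -a"
    by (intro mult_right_mono) auto
  then show "(1 + r) ^ m * exp (- c * r\<^sup>2) \<le> E * r powr -a"
    using r by (simp add: powr_minus exp_minus field_simps)
qed

lemma gauss_norm_powr_integrable:
  fixes s a :: real
  assumes s: "0 < s" and a: "0 \<le> a" "a < DIM('a)"
  shows "integrable lborel (\<lambda>y::'a::euclidean_space. exp (- s * (norm y)\<^sup>2) * norm y powr -a)"
proof (rule integrableI_bounded)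
  define b where "b = real DIM('a) + 1"
  define m where "m = DIM('a) + 1"
  define K where "K = exp ((real m)\<^sup>2 / (4 * s))"
  have K: "1 \<le> K" unfolding K_def using s by simp
  have bound: "exp (- s * (norm y)\<^sup>2) * norm y powr -a
      \<le> K * (if norm y \<le> 1 then norm y powr -a else norm y powr -b)" for y :: 'a
  proof (cases "norm y \<le> 1")
    case True
    have "exp (- s * (norm y)\<^sup>2) * norm y powr -a \<le> 1 * norm y powr -a"
      using s by (intro mult_right_mono) auto
    also have "\<dots> \<le> K * norm y powr -a" using K by (intro mult_right_mono) auto
    finally show ?thesis using True by simp
  next
    case False
    then have y: "1 < norm y" by simp
    have "norm y powr (b - a) \<le> norm y powr b" using y a by (intro powr_mono) auto
    also have "\<dots> = norm y ^ m"
    proof -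
      have "y \<noteq> 0" using y by auto
      then show ?thesis using powr_realpow[of "norm y" m] by (simp add: b_def m_def add.commute)
    qed
    also have "\<dots> \<le> (1 + norm y) ^ m" by (intro power_mono) auto
    also have "\<dots> \<le> K * exp (s * (norm y)\<^sup>2)"
      unfolding K_def using one_plus_power_le_exp_square[of "norm y" s m] s by simp
    finally have *: "norm y powr (b - a) \<le> K * exp (s * (norm y)\<^sup>2)" .
    have "exp (- s * (norm y)\<^sup>2) * norm y powr -a
        = exp (- s * (norm y)\<^sup>2) * norm y powr (b - a) * norm y powr -b"
      using y by (simp add: powr_add[symmetric])
    also have "\<dots> \<le> exp (- s * (norm y)\<^sup>2) * (K * exp (s * (norm y)\<^sup>2)) * norm y powr -b"
      using * by (intro mult_right_mono mult_left_mono) auto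
    also have "\<dots> = K * norm y powr -b" by (simp add: exp_minus field_simps)
    finally show ?thesis using False by simp
  qed
  have "(\<integral>\<^sup>+ y. ennreal (norm (exp (- s * (norm y)\<^sup>2) * norm (y::'a) powr -a)) \<partial>lborel)
     \<le> (\<integral>\<^sup>+ y. ennreal K * ennreal (if norm (y::'a) \<le> 1 then norm y powr -a else norm y powr -b) \<partial>lborel)"
    using K bound by (intro nn_integral_mono) (simp add: ennreal_mult[symmetric] ennreal_leI)
  also have "\<dots> = ennreal K * (\<integral>\<^sup>+ y. ennreal (if norm (y::'a) \<le> 1 then norm y powr -a else norm y powr -b) \<partial>lborel)"
    by (rule nn_integral_cmult) measurable
  also have "\<dots> < \<infinity>"
    using nn_integral_two_sided_norm_powr_finite[OF a, of b]
    by (simp add: b_def ennreal_mult_less_top)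
  finally show "(\<integral>\<^sup>+ y. ennreal (norm (exp (- s * (norm y)\<^sup>2) * norm (y::'a) powr -a)) \<partial>lborel) < \<infinity>" .
qed measurable

lemma norm_powr_ball_integrable:
  fixes a :: real
  assumes a: "0 \<le> a" "a < DIM('a)"
  shows "integrable lborel (\<lambda>y::'a::euclidean_space. indicator (cball 0 1) y * norm y powr -a)"
proof (rule Bochner_Integration.integrable_bound)
  show "integrable lborel (\<lambda>y::'a. exp 1 * (exp (- 1 * (norm y)\<^sup>2) * norm y powr -a))"
    using gauss_norm_powr_integrable[of 1 a] a by (intro integrable_mult_right) auto
  have "indicator (cball 0 1) y * norm y powr -a \<le> exp 1 * exp (- 1 * (norm y)\<^sup>2) * norm y powr -a"
    for y :: 'a
  proof (cases "y \<in> cball 0 1")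
    case True
    then have "(norm y)\<^sup>2 \<le> 1" by (simp add: power_le_one)
    then have "1 \<le> exp 1 * exp (- 1 * (norm y)\<^sup>2)" by (simp flip: exp_add)
    from mult_right_mono[OF this, of "norm y powr -a"] True show ?thesis by simp
  qed simp
  then show "AE y in lborel. norm (indicator (cball 0 1) y * norm (y::'a) powr -a)
      \<le> norm (exp 1 * (exp (- 1 * (norm y)\<^sup>2) * norm y powr -a))"
    by (simp add: mult.assoc)
qed measurable

lemma nn_integral_min_one_norm_powr_finite:
  fixes b :: real
  assumes b: "DIM('a) < b"
  shows "(\<integral>\<^sup>+\<xi>. ennreal (if norm \<xi> \<le> 1 then 1 else norm (\<xi>::'a::euclidean_space) powr -b) \<partial>lborel) < \<infinity>"
proof -
  \<comment> \<open>\<open>norm \<xi> powr -0\<close> is 1 except at the origin, where \<open>0 powr 0 = 0\<close>; the indicator of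
    the unit ball makes up the difference.\<close>
  have "(\<integral>\<^sup>+\<xi>. ennreal (if norm \<xi> \<le> 1 then 1 else norm (\<xi>::'a) powr -b) \<partial>lborel)
      \<le> (\<integral>\<^sup>+\<xi>. ennreal (if norm \<xi> \<le> 1 then norm \<xi> powr -0 else norm \<xi> powr -b)
          + ennreal (indicator (cball (0::'a) 1) \<xi>) \<partial>lborel)"
    by (intro nn_integral_mono) (auto simp: ennreal_plus[symmetric] simp del: ennreal_plus)
  also have "\<dots> = (\<integral>\<^sup>+\<xi>. ennreal (if norm \<xi> \<le> 1 then norm (\<xi>::'a) powr -0 else norm \<xi> powr -b) \<partial>lborel)
      + (\<integral>\<^sup>+\<xi>. ennreal (indicator (cball (0::'a) 1) \<xi>) \<partial>lborel)"
    by (rule nn_integral_add) auto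
  also have "\<dots> < \<infinity>"
    using nn_integral_two_sided_norm_powr_finite[of 0 b, where 'a = 'a] b
    by (simp add: less_top[symmetric] ennreal_indicator emeasure_cball)
  finally show ?thesis .
qed

lemma nn_integral_lborel_affine:
  fixes f :: "'a::euclidean_space \<Rightarrow> ennreal" and c :: real
  assumes [measurable]: "f \<in> borel_measurable borel" and c: "c \<noteq> 0"
  shows "(\<integral>\<^sup>+x. f x \<partial>lborel) = ennreal (\<bar>c\<bar> ^ DIM('a)) * (\<integral>\<^sup>+x. f (t + c *\<^sub>R x) \<partial>lborel)"
  by (subst lborel_affine[OF c, of t]) (simp add: nn_integral_density nn_integral_distr nn_integral_cmult)

lemma lborel_integrable_affine:
  fixes f :: "'a::euclidean_space \<Rightarrow> 'b::{banach, second_countable_topology}"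
  assumes f: "integrable lborel f" and c: "c \<noteq> 0"
  shows "integrable lborel (\<lambda>x. f (t + c *\<^sub>R x))"
  using f f[THEN borel_measurable_integrable] unfolding integrable_iff_bounded
  by (subst (asm) nn_integral_lborel_affine[where c = c and t = t])
    (use c in \<open>auto simp: ennreal_mult_less_top\<close>)

lemma lborel_integrable_affine_iff:
  fixes f :: "'a::euclidean_space \<Rightarrow> 'b::{banach, second_countable_topology}"
  assumes c: "c \<noteq> 0"
  shows "integrable lborel (\<lambda>x. f (t + c *\<^sub>R x)) \<longleftrightarrow> integrable lborel f"
  using lborel_integrable_affine[of f c t]
    lborel_integrable_affine[of "\<lambda>x. f (t + c *\<^sub>R x)" "1 / c" "- (1 / c) *\<^sub>R t"] c
  by (auto simp: algebra_simps)

lemma lborel_integral_affine: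
  fixes f :: "'a::euclidean_space \<Rightarrow> 'b::{banach, second_countable_topology}" and c :: real
  assumes c: "c \<noteq> 0"
  shows "(\<integral>x. f x \<partial>lborel) = (\<bar>c\<bar> ^ DIM('a)) *\<^sub>R (\<integral>x. f (t + c *\<^sub>R x) \<partial>lborel)"
proof (cases "integrable lborel f")
  case True
  then show ?thesis
    using c True[THEN borel_measurable_integrable] True[THEN lborel_integrable_affine, of c t]
    by (subst lborel_affine[OF c, of t]) (simp add: integral_density integral_distr)
next
  case False
  with c show ?thesis by (simp add: lborel_integrable_affine_iff not_integrable_integral_eq)
qed

lemma nn_integral_parabolic_profile:
  fixes b t :: real
  assumes t: "0 < t"
  shows "(\<integral>\<^sup>+x. ennreal (if norm x \<le> sqrt t then t powr (- b / 2) else norm (x::'a::euclidean_space) powr -b) \<partial>lborel)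
    = ennreal (t powr ((DIM('a) - b) / 2))
      * (\<integral>\<^sup>+\<xi>. ennreal (if norm \<xi> \<le> 1 then 1 else norm (\<xi>::'a) powr -b) \<partial>lborel)"
proof -
  define m where "m x = (if norm x \<le> sqrt t then t powr (- b / 2) else norm (x::'a) powr -b)" for x
  have s: "0 < sqrt t" using t by simp
  have "(\<integral>\<^sup>+x. ennreal (m x) \<partial>lborel) = ennreal (\<bar>sqrt t\<bar> ^ DIM('a)) * (\<integral>\<^sup>+\<xi>. ennreal (m (0 + sqrt t *\<^sub>R \<xi>)) \<partial>lborel)"
    by (rule nn_integral_lborel_affine) (use s in \<open>auto simp: m_def\<close>)
  also have "(\<lambda>\<xi>. ennreal (m (0 + sqrt t *\<^sub>R \<xi>)))
      = (\<lambda>\<xi>. ennreal (t powr (- b / 2)) * ennreal (if norm \<xi> \<le> 1 then 1 else norm \<xi> powr -b))"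
  proof
    fix \<xi> :: 'a
    have "(sqrt t * norm \<xi>) powr -b = t powr (- b / 2) * norm \<xi> powr -b"
      using s t by (simp add: powr_mult powr_half_sqrt[symmetric] powr_powr)
    then show "ennreal (m (0 + sqrt t *\<^sub>R \<xi>))
        = ennreal (t powr (- b / 2)) * ennreal (if norm \<xi> \<le> 1 then 1 else norm \<xi> powr -b)"
      using s by (simp add: m_def ennreal_mult[symmetric] mult_le_cancel_left1)
  qed
  also have "ennreal (\<bar>sqrt t\<bar> ^ DIM('a)) * (\<integral>\<^sup>+\<xi>. ennreal (t powr (- b / 2))
      * ennreal (if norm \<xi> \<le> 1 then 1 else norm (\<xi>::'a) powr -b) \<partial>lborel)
    = ennreal (\<bar>sqrt t\<bar> ^ DIM('a) * t powr (- b / 2))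
      * (\<integral>\<^sup>+\<xi>. ennreal (if norm \<xi> \<le> 1 then 1 else norm (\<xi>::'a) powr -b) \<partial>lborel)"
    by (simp add: nn_integral_cmult ennreal_mult mult.assoc)
  also have "\<bar>sqrt t\<bar> ^ DIM('a) * t powr (- b / 2) = t powr ((DIM('a) - b) / 2)"
    using t by (simp add: powr_half_sqrt[symmetric] powr_realpow[symmetric] powr_powr
        powr_add[symmetric] diff_divide_distrib)
  finally show ?thesis by (simp add: m_def)
qed

section \<open>Polynomials in x, t and 1/t\<close>

lemma has_derivative_fst_nth [derivative_intros]:
  fixes F :: "(('a::real_normed_vector^'m) \<times> 'c::real_normed_vector) filter"
  shows "((\<lambda>q. fst q $ i) has_derivative (\<lambda>v. fst v $ i)) F"
proof -
  have "bounded_linear (\<lambda>v::('a^'m) \<times> 'c. fst v $ i)"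
    using bounded_linear_compose[OF bounded_linear_vec_nth[of i] bounded_linear_fst] by (simp add: o_def)
  then show ?thesis by (rule bounded_linear_imp_has_derivative)
qed

inductive_set laurent_polys :: "((real^'n) \<times> real \<Rightarrow> real) set" where
  const: "(\<lambda>q. c) \<in> laurent_polys"
| coord: "(\<lambda>q. fst q $ i) \<in> laurent_polys"
| time: "(\<lambda>q. snd q) \<in> laurent_polys"
| inverse_time: "(\<lambda>q. 1 / snd q) \<in> laurent_polys"
| add: "P \<in> laurent_polys \<Longrightarrow> Q \<in> laurent_polys \<Longrightarrow> (\<lambda>q. P q + Q q) \<in> laurent_polys"
| mult: "P \<in> laurent_polys \<Longrightarrow> Q \<in> laurent_polys \<Longrightarrow> (\<lambda>q. P q * Q q) \<in> laurent_polys"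

lemma laurent_polys_sum:
  "finite S \<Longrightarrow> (\<And>i. i \<in> S \<Longrightarrow> f i \<in> laurent_polys) \<Longrightarrow> (\<lambda>q. \<Sum>i\<in>S. f i q) \<in> laurent_polys"
  by (induction S rule: finite_induct) (auto intro: laurent_polys.intros)

lemma laurent_polys_diff:
  "P \<in> laurent_polys \<Longrightarrow> Q \<in> laurent_polys \<Longrightarrow> (\<lambda>q. P q - Q q) \<in> laurent_polys"
  using laurent_polys.add[OF _ laurent_polys.mult[OF laurent_polys.const[of "-1"]], of P Q] by simp

lemma laurent_polys_divide_time: "P \<in> laurent_polys \<Longrightarrow> (\<lambda>q. P q / snd q) \<in> laurent_polys"
  using laurent_polys.mult[OF _ laurent_polys.inverse_time, of P] by simp

lemma laurent_polys_has_derivative: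
  fixes P :: "(real^'n) \<times> real \<Rightarrow> real"
  assumes "P \<in> laurent_polys"
  shows "\<exists>D. (\<forall>q. 0 < snd q \<longrightarrow> (P has_derivative D q) (at q)) \<and> (\<forall>v. (\<lambda>q. D q v) \<in> laurent_polys)"
  using assms
proof induction
  case (const c)
  show ?case by (rule exI[of _ "\<lambda>q v. 0"]) (auto intro: laurent_polys.const)
next
  case (coord i)
  show ?case
    by (intro exI[of _ "\<lambda>q v. fst v $ i"]) (auto intro: has_derivative_fst_nth laurent_polys.const)
next
  case time
  show ?case
    by (rule exI[of _ "\<lambda>q v. snd v"]) (auto intro!: derivative_eq_intros intro: laurent_polys.const)
next
  case inverse_time
  show ?case
  proof (intro exI[of _ "\<lambda>q v. - snd v * ((1 / snd q) * (1 / snd q))"] conjI allI impI)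
    show "((\<lambda>q. 1 / snd q) has_derivative (\<lambda>v. - snd v * ((1 / snd q) * (1 / snd q)))) (at q)"
      if "0 < snd q" for q :: "(real^'n) \<times> real"
      using that by (auto intro!: derivative_eq_intros simp: fun_eq_iff field_simps)
  qed (intro laurent_polys.mult laurent_polys.const laurent_polys.inverse_time)
next
  case (add P Q)
  then obtain DP DQ where
    "\<forall>q. 0 < snd q \<longrightarrow> (P has_derivative DP q) (at q)" "\<forall>v. (\<lambda>q. DP q v) \<in> laurent_polys"
    "\<forall>q. 0 < snd q \<longrightarrow> (Q has_derivative DQ q) (at q)" "\<forall>v. (\<lambda>q. DQ q v) \<in> laurent_polys"
    by blast
  then show ?case
    by (intro exI[of _ "\<lambda>q v. DP q v + DQ q v"]) (auto intro!: has_derivative_add laurent_polys.add)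
next
  case (mult P Q)
  then obtain DP DQ where
    "\<forall>q. 0 < snd q \<longrightarrow> (P has_derivative DP q) (at q)" "\<forall>v. (\<lambda>q. DP q v) \<in> laurent_polys"
    "\<forall>q. 0 < snd q \<longrightarrow> (Q has_derivative DQ q) (at q)" "\<forall>v. (\<lambda>q. DQ q v) \<in> laurent_polys"
    by blast
  with mult.hyps show ?case
    by (intro exI[of _ "\<lambda>q v. P q * DQ q v + DP q v * Q q"])
      (auto intro!: has_derivative_mult laurent_polys.add laurent_polys.mult)
qed

lemma laurent_polys_bound:
  fixes P :: "(real^'n) \<times> real \<Rightarrow> real"
  assumes "P \<in> laurent_polys" "0 < lo"
  shows "\<exists>C m. 0 \<le> C \<and> (\<forall>q. lo \<le> snd q \<and> snd q \<le> hi \<longrightarrow> \<bar>P q\<bar> \<le> C * (1 + norm (fst q)) ^ m)"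
  using assms(1)
proof induction
  case (const c)
  show ?case by (rule exI[of _ "\<bar>c\<bar>"], rule exI[of _ 0]) auto
next
  case (coord i)
  show ?case
    by (rule exI[of _ 1], rule exI[of _ 1]) (auto intro: order_trans[OF component_le_norm_cart])
next
  case time
  show ?case by (rule exI[of _ "\<bar>hi\<bar>"], rule exI[of _ 0]) (use assms(2) in auto)
next
  case inverse_time
  show ?case
    by (rule exI[of _ "1 / lo"], rule exI[of _ 0]) (use assms(2) in \<open>auto simp: field_simps\<close>)
next
  case (add P Q)
  then obtain C1 m1 C2 m2 where
    P: "0 \<le> C1" "\<forall>q. lo \<le> snd q \<and> snd q \<le> hi \<longrightarrow> \<bar>P q\<bar> \<le> C1 * (1 + norm (fst q)) ^ m1" and
    Q: "0 \<le> C2" "\<forall>q. lo \<le> snd q \<and> snd q \<le> hi \<longrightarrow> \<bar>Q q\<bar> \<le> C2 * (1 + norm (fst q)) ^ m2"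
    by blast
  have "\<bar>P q + Q q\<bar> \<le> (C1 + C2) * (1 + norm (fst q)) ^ (m1 + m2)"
    if "lo \<le> snd q \<and> snd q \<le> hi" for q :: "(real^'n) \<times> real"
  proof -
    have "\<bar>P q + Q q\<bar> \<le> \<bar>P q\<bar> + \<bar>Q q\<bar>" by (rule abs_triangle_ineq)
    also have "\<dots> \<le> C1 * (1 + norm (fst q)) ^ m1 + C2 * (1 + norm (fst q)) ^ m2"
      using P(2)[rule_format, OF that] Q(2)[rule_format, OF that] by (rule add_mono)
    also have "\<dots> \<le> C1 * (1 + norm (fst q)) ^ (m1 + m2) + C2 * (1 + norm (fst q)) ^ (m1 + m2)"
      using P(1) Q(1) by (intro add_mono mult_left_mono power_increasing) auto
    finally show ?thesis by (simp add: algebra_simps)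
  qed
  then show ?case using P(1) Q(1) by (intro exI[of _ "C1 + C2"] exI[of _ "m1 + m2"]) auto
next
  case (mult P Q)
  then obtain C1 m1 C2 m2 where
    P: "0 \<le> C1" "\<forall>q. lo \<le> snd q \<and> snd q \<le> hi \<longrightarrow> \<bar>P q\<bar> \<le> C1 * (1 + norm (fst q)) ^ m1" and
    Q: "0 \<le> C2" "\<forall>q. lo \<le> snd q \<and> snd q \<le> hi \<longrightarrow> \<bar>Q q\<bar> \<le> C2 * (1 + norm (fst q)) ^ m2"
    by blast
  have "\<bar>P q * Q q\<bar> \<le> (C1 * C2) * (1 + norm (fst q)) ^ (m1 + m2)"
    if "lo \<le> snd q \<and> snd q \<le> hi" for q :: "(real^'n) \<times> real"
  proof -
    have "\<bar>P q * Q q\<bar> \<le> (C1 * (1 + norm (fst q)) ^ m1) * (C2 * (1 + norm (fst q)) ^ m2)"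
      unfolding abs_mult using P(2)[rule_format, OF that] Q(2)[rule_format, OF that] P(1) Q(1)
      by (intro mult_mono) auto
    then show ?thesis by (simp add: algebra_simps power_add)
  qed
  then show ?case using P(1) Q(1) by (intro exI[of _ "C1 * C2"] exI[of _ "m1 + m2"]) auto
qed

lemma laurent_polys_measurable:
  "P \<in> laurent_polys \<Longrightarrow> P \<in> borel_measurable borel"
proof (induction rule: laurent_polys.induct)
  case inverse_time
  have "(\<lambda>q. snd q) \<in> borel_measurable (borel :: ((real^'n) \<times> real) measure)"
    by (intro borel_measurable_continuous_onI continuous_intros)
  then show ?case by (intro borel_measurable_divide borel_measurable_const)
qed (auto intro!: borel_measurable_continuous_onI continuous_intros borel_measurable_add borel_measurable_times)

section \<open>The heat kernel on space-time\<close>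

definition Phi :: "(real^'n) \<times> real \<Rightarrow> real" where
  "Phi q = heat_kernel (fst q) (snd q)"

definition Phi_log_deriv :: "(real^'n) \<times> real \<Rightarrow> (real^'n) \<times> real \<Rightarrow> real" where
  "Phi_log_deriv q v =
     ((fst q \<bullet> fst q) / (4 * (snd q)\<^sup>2) - real CARD('n) / (2 * snd q)) * snd v
     - (fst q \<bullet> fst v) / (2 * snd q)"

lemma open_pos_time: "open {q :: 'a::topological_space \<times> real. 0 < snd q}"
  by (intro open_Collect_less continuous_intros)

lemma Phi_nonneg: "0 \<le> Phi q"
  by (simp add: Phi_def heat_kernel_def)

lemma Phi_measurable [measurable]: "Phi \<in> borel_measurable borel"
proof -
  have [measurable]: "fst \<in> borel_measurable (borel :: ((real^'n) \<times> real) measure)"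
    "snd \<in> borel_measurable (borel :: ((real^'n) \<times> real) measure)"
    by (auto intro!: borel_measurable_continuous_onI continuous_intros)
  show ?thesis unfolding Phi_def[abs_def] heat_kernel_def by measurable
qed

lemma Phi_pos_time:
  fixes q :: "(real^'n) \<times> real"
  shows "0 < snd q \<Longrightarrow> Phi q = (4 * pi * snd q) powr (- real CARD('n) / 2) * exp (- (fst q \<bullet> fst q) / (4 * snd q))"
  by (simp add: Phi_def heat_kernel_def power2_norm_eq_inner)

lemma Phi_has_derivative:
  fixes q :: "(real^'n) \<times> real"
  assumes "0 < snd q"
  shows "(Phi has_derivative (\<lambda>v. Phi q * Phi_log_deriv q v)) (at q)"
proof -
  let ?G = "\<lambda>q::(real^'n) \<times> real.
    (4 * pi * snd q) powr (- real CARD('n) / 2) * exp (- (fst q \<bullet> fst q) / (4 * snd q))"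
  have "(?G has_derivative (\<lambda>v. ?G q * Phi_log_deriv q v)) (at q)"
    using assms
    by (auto intro!: derivative_eq_intros
        simp: Phi_log_deriv_def fun_eq_iff field_simps power2_eq_square inner_commute)
  then have "(?G has_derivative (\<lambda>v. Phi q * Phi_log_deriv q v)) (at q)"
    using Phi_pos_time[OF assms] by simp
  then show ?thesis
    by (rule has_derivative_transform_within_open[OF _ open_pos_time])
      (use assms in \<open>auto simp: Phi_pos_time\<close>)
qed

lemma Phi_log_deriv_laurent:
  fixes v :: "(real^'n) \<times> real"
  shows "(\<lambda>q. Phi_log_deriv q v) \<in> laurent_polys"
proof -
  have "Phi_log_deriv q v =
      ((\<Sum>i\<in>UNIV. fst q $ i * fst q $ i) * (1 / 4) * ((1 / snd q) * (1 / snd q))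
        - real CARD('n) / 2 * (1 / snd q)) * snd v
      - (\<Sum>i\<in>UNIV. fst q $ i * fst v $ i) * (1 / 2) * (1 / snd q)" for q :: "(real^'n) \<times> real"
    by (simp add: Phi_log_deriv_def inner_vec_def power2_eq_square)
  then show ?thesis
    by (simp only:) (intro laurent_polys_diff laurent_polys_sum laurent_polys.intros finite)
qed

lemma Phi_le_gauss:
  fixes z :: "real^'n"
  assumes t0: "0 < t0" and t: "t0 / 2 \<le> t" "t \<le> 3 * t0 / 2"
  shows "Phi (z, t) \<le> (2 * pi * t0) powr (- real CARD('n) / 2) * exp (- (norm z)\<^sup>2 / (6 * t0))"
proof -
  have "Phi (z, t) = (4 * pi * t) powr (- real CARD('n) / 2) * exp (- (norm z)\<^sup>2 / (4 * t))"
    using t t0 by (simp add: Phi_def heat_kernel_def)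
  also have "\<dots> \<le> (2 * pi * t0) powr (- real CARD('n) / 2) * exp (- (norm z)\<^sup>2 / (6 * t0))"
  proof (intro mult_mono)
    show "(4 * pi * t) powr (- real CARD('n) / 2) \<le> (2 * pi * t0) powr (- real CARD('n) / 2)"
      using t t0 by (intro powr_mono2') auto
    have "(norm z)\<^sup>2 / (6 * t0) \<le> (norm z)\<^sup>2 / (4 * t)"
      using t t0 by (intro divide_left_mono) auto
    then show "exp (- (norm z)\<^sup>2 / (4 * t)) \<le> exp (- (norm z)\<^sup>2 / (6 * t0))" by simp
  qed auto
  finally show ?thesis .
qed

lemma laurent_Phi_gauss_bound:
  fixes P :: "(real^'n) \<times> real \<Rightarrow> real"
  assumes P: "P \<in> laurent_polys" and t0: "0 < t0"
  shows "\<exists>C\<ge>0. \<forall>z t. t0 / 2 \<le> t \<and> t \<le> 3 * t0 / 2 \<longrightarrow>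
           \<bar>P (z, t) * Phi (z, t)\<bar> \<le> C * exp (- (norm z)\<^sup>2 / (12 * t0))"
proof -
  obtain C m where C: "0 \<le> C"
    "\<forall>q. t0 / 2 \<le> snd q \<and> snd q \<le> 3 * t0 / 2 \<longrightarrow> \<bar>P q\<bar> \<le> C * (1 + norm (fst q)) ^ m"
    using laurent_polys_bound[OF P, of "t0 / 2" "3 * t0 / 2"] t0 by auto
  define A where "A = (2 * pi * t0) powr (- real CARD('n) / 2)"
  define E where "E = exp ((real m)\<^sup>2 / (4 * (1 / (12 * t0))))"
  have "\<bar>P (z, t) * Phi (z, t)\<bar> \<le> C * A * E * exp (- (norm z)\<^sup>2 / (12 * t0))"
    if t: "t0 / 2 \<le> t" "t \<le> 3 * t0 / 2" for z t
  proof -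
    have "\<bar>P (z, t) * Phi (z, t)\<bar> \<le> (C * (1 + norm z) ^ m) * (A * exp (- (norm z)\<^sup>2 / (6 * t0)))"
      unfolding abs_mult using C(2)[rule_format, of "(z, t)"] t Phi_le_gauss[OF t0 t, of z] C(1)
      by (intro mult_mono) (auto simp: A_def Phi_nonneg)
    also have "\<dots> \<le> (C * (E * exp (1 / (12 * t0) * (norm z)\<^sup>2))) * (A * exp (- (norm z)\<^sup>2 / (6 * t0)))"
      using one_plus_power_le_exp_square[of "norm z" "1 / (12 * t0)" m] t0 C(1)
      unfolding E_def A_def by (intro mult_right_mono mult_left_mono) auto
    also have "\<dots> = C * A * E * (exp (1 / (12 * t0) * (norm z)\<^sup>2) * exp (- (norm z)\<^sup>2 / (6 * t0)))"
      by (simp add: algebra_simps)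
    also have "exp (1 / (12 * t0) * (norm z)\<^sup>2) * exp (- (norm z)\<^sup>2 / (6 * t0)) = exp (- (norm z)\<^sup>2 / (12 * t0))"
      using t0 by (simp add: exp_add[symmetric] field_simps)
    finally show ?thesis .
  qed
  moreover have "0 \<le> C * A * E" using C(1) by (simp add: A_def E_def)
  ultimately show ?thesis by blast
qed

lemma exp_norm_diff_le:
  fixes x x0 y :: "'a::real_normed_vector"
  assumes c: "0 < c" and x: "norm (x - x0) \<le> 1"
  shows "exp (- (norm (x - y))\<^sup>2 / c) \<le> exp ((norm x0 + 1)\<^sup>2 / c) * exp (- (1 / (2 * c)) * (norm y)\<^sup>2)"
proof -
  define R where "R = norm x0 + 1"
  have "norm x \<le> R" using x norm_triangle_ineq2[of x x0] unfolding R_def by linarith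
  then have "norm y \<le> norm (x - y) + R" using norm_triangle_ineq3[of x y] by (simp add: norm_minus_commute)
  then have "(norm y)\<^sup>2 \<le> (norm (x - y) + R)\<^sup>2" by (intro power_mono) auto
  also have "\<dots> \<le> 2 * (norm (x - y))\<^sup>2 + 2 * R\<^sup>2"
    using sum_squares_ge_zero[of "norm (x - y) - R" 0] by (simp add: power2_eq_square algebra_simps)
  finally have "- (norm (x - y))\<^sup>2 / c \<le> R\<^sup>2 / c + - (1 / (2 * c)) * (norm y)\<^sup>2"
    using c by (simp add: field_simps)
  then show ?thesis unfolding R_def by (simp flip: exp_add)
qed

lemma laurent_Phi_local_bound:
  fixes P :: "(real^'n) \<times> real \<Rightarrow> real" and x0 :: "real^'n"
  assumes P: "P \<in> laurent_polys" and t0: "0 < t0"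
  shows "\<exists>C\<ge>0. \<forall>x t y. norm (x - x0) \<le> 1 \<and> t0 / 2 \<le> t \<and> t \<le> 3 * t0 / 2 \<longrightarrow>
           \<bar>P (x - y, t) * Phi (x - y, t)\<bar> \<le> C * exp (- (1 / (24 * t0)) * (norm y)\<^sup>2)"
proof -
  obtain C where C: "0 \<le> C" "\<forall>z t. t0 / 2 \<le> t \<and> t \<le> 3 * t0 / 2 \<longrightarrow>
      \<bar>P (z, t) * Phi (z, t)\<bar> \<le> C * exp (- (norm z)\<^sup>2 / (12 * t0))"
    using laurent_Phi_gauss_bound[OF P t0] by blast
  define E where "E = exp ((norm x0 + 1)\<^sup>2 / (12 * t0))"
  have "\<bar>P (x - y, t) * Phi (x - y, t)\<bar> \<le> C * E * exp (- (1 / (24 * t0)) * (norm y)\<^sup>2)"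
    if "norm (x - x0) \<le> 1" "t0 / 2 \<le> t" "t \<le> 3 * t0 / 2" for x t y
  proof -
    have "\<bar>P (x - y, t) * Phi (x - y, t)\<bar> \<le> C * exp (- (norm (x - y))\<^sup>2 / (12 * t0))"
      using C(2) that by blast
    also have "\<dots> \<le> C * (E * exp (- (1 / (2 * (12 * t0))) * (norm y)\<^sup>2))"
      using exp_norm_diff_le[of "12 * t0" x x0 y] that t0 C(1) unfolding E_def
      by (intro mult_left_mono) auto
    finally show ?thesis by (simp add: mult.assoc)
  qed
  moreover have "0 \<le> C * E" using C(1) by (simp add: E_def)
  ultimately show ?thesis by blast
qed

lemma laurent_Phi_has_derivative:
  fixes P :: "(real^'n) \<times> real \<Rightarrow> real"
  assumes P: "P \<in> laurent_polys"
  shows "\<exists>D. (\<forall>q. 0 < snd q \<longrightarrow> ((\<lambda>q. P q * Phi q) has_derivative D q) (at q)) \<and>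
             (\<forall>v. \<exists>P'\<in>laurent_polys. \<forall>q. 0 < snd q \<longrightarrow> D q v = P' q * Phi q)"
proof -
  obtain DP where DP: "\<forall>q. 0 < snd q \<longrightarrow> (P has_derivative DP q) (at q)"
    "\<forall>v. (\<lambda>q. DP q v) \<in> laurent_polys"
    using laurent_polys_has_derivative[OF P] by blast
  show ?thesis
  proof (intro exI[of _ "\<lambda>q v. P q * (Phi q * Phi_log_deriv q v) + DP q v * Phi q"] conjI allI impI)
    show "((\<lambda>q. P q * Phi q) has_derivative (\<lambda>v. P q * (Phi q * Phi_log_deriv q v) + DP q v * Phi q)) (at q)"
      if "0 < snd q" for q
      using that by (intro has_derivative_mult Phi_has_derivative DP(1)[rule_format])
    show "\<exists>P'\<in>laurent_polys. \<forall>q. 0 < snd q \<longrightarrow>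
            P q * (Phi q * Phi_log_deriv q v) + DP q v * Phi q = P' q * Phi q" for v
      by (rule bexI[of _ "\<lambda>q. P q * Phi_log_deriv q v + DP q v"])
        (auto simp: algebra_simps intro!: laurent_polys.intros P Phi_log_deriv_laurent DP(2)[rule_format])
  qed
qed

section \<open>Differentiation under the integral sign\<close>

lemma has_derivative_of_quadratic_remainder:
  fixes f :: "'a::real_normed_vector \<Rightarrow> 'b::real_normed_vector"
  assumes L: "bounded_linear L" and \<delta>: "0 < \<delta>"
    and rem: "\<And>h. norm h < \<delta> \<Longrightarrow> norm (f (p + h) - f p - L h) \<le> M * (norm h)\<^sup>2"
  shows "(f has_derivative L) (at p)"
  unfolding has_derivative_at_alt
proof (intro conjI L allI impI)
  fix e :: real assume e: "0 < e"
  define d where "d = min \<delta> (e / (\<bar>M\<bar> + 1))"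
  have "norm (f y - f p - L (y - p)) \<le> e * norm (y - p)" if y: "norm (y - p) < d" for y
  proof -
    have "norm (f y - f p - L (y - p)) \<le> M * (norm (y - p))\<^sup>2"
      using rem[of "y - p"] y by (simp add: d_def)
    also have "\<dots> \<le> (\<bar>M\<bar> + 1) * (norm (y - p))\<^sup>2"
      by (intro mult_right_mono) auto
    also have "\<dots> = norm (y - p) * ((\<bar>M\<bar> + 1) * norm (y - p))"
      by (simp add: power2_eq_square)
    also have "\<dots> \<le> norm (y - p) * e"
      using y by (intro mult_left_mono) (auto simp: d_def field_simps)
    finally show ?thesis by (simp add: mult.commute)
  qed
  moreover have "0 < d" using \<delta> e by (simp add: d_def)
  ultimately show "\<exists>d>0. \<forall>y. norm (y - p) < d \<longrightarrow> norm (f y - f p - L (y - p)) \<le> e * norm (y - p)"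
    by blast
qed

lemma second_order_remainder_bound:
  fixes F :: "'a::real_normed_vector \<Rightarrow> real"
  assumes DF: "\<And>s. 0 \<le> s \<Longrightarrow> s \<le> 1 \<Longrightarrow> (F has_derivative DF (q + s *\<^sub>R h)) (at (q + s *\<^sub>R h))"
    and D2F: "\<And>s. 0 \<le> s \<Longrightarrow> s \<le> 1 \<Longrightarrow>
      ((\<lambda>q. DF q h) has_derivative D2F (q + s *\<^sub>R h)) (at (q + s *\<^sub>R h))"
    and B: "\<And>s. 0 \<le> s \<Longrightarrow> s \<le> 1 \<Longrightarrow> \<bar>D2F (q + s *\<^sub>R h) h\<bar> \<le> B"
  shows "\<bar>F (q + h) - F q - DF q h\<bar> \<le> B"
proof -
  have along: "((\<lambda>s. G (q + s *\<^sub>R h)) has_real_derivative DG h) (at s)"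
    if "(G has_derivative DG) (at (q + s *\<^sub>R h))" for G :: "'a \<Rightarrow> real" and DG s
  proof -
    have "((\<lambda>s. q + s *\<^sub>R h) has_derivative (\<lambda>r. r *\<^sub>R h)) (at s)"
      by (auto intro!: derivative_eq_intros)
    from has_derivative_compose[OF this that]
    have "((\<lambda>s. G (q + s *\<^sub>R h)) has_derivative (\<lambda>r. DG (r *\<^sub>R h))) (at s)" .
    moreover have "(\<lambda>r. DG (r *\<^sub>R h)) = (*) (DG h)"
      using linear_scale[OF has_derivative_linear[OF that]] by (auto simp: fun_eq_iff)
    ultimately show ?thesis by (simp add: has_field_derivative_def)
  qed
  define g where "g s = F (q + s *\<^sub>R h)" for s
  define g1 where "g1 s = DF (q + s *\<^sub>R h) h" for s
  obtain \<xi> where \<xi>: "0 < \<xi>" "\<xi> < 1" "g 1 - g 0 = (1 - 0) * g1 \<xi>"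
    using MVT2[of 0 1 g g1] along DF unfolding g_def g1_def by fastforce
  obtain \<eta> where \<eta>: "0 < \<eta>" "\<eta> < \<xi>" "g1 \<xi> - g1 0 = (\<xi> - 0) * D2F (q + \<eta> *\<^sub>R h) h"
    using MVT2[of 0 \<xi> g1 "\<lambda>s. D2F (q + s *\<^sub>R h) h"] along D2F \<xi> unfolding g1_def by fastforce
  have "F (q + h) - F q - DF q h = \<xi> * D2F (q + \<eta> *\<^sub>R h) h"
    using \<xi>(3) \<eta>(3) by (simp add: g_def g1_def)
  also have "\<bar>\<dots>\<bar> \<le> 1 * B"
    unfolding abs_mult using \<xi> \<eta> B[of \<eta>] B[of 0] by (intro mult_mono) auto
  finally show ?thesis by simp
qed

lemma abs_basis_quadratic_form_le:
  fixes h :: "'a::euclidean_space"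
  assumes "\<And>j l. j \<in> Basis \<Longrightarrow> l \<in> Basis \<Longrightarrow> \<bar>c j l\<bar> \<le> C j l"
  shows "\<bar>\<Sum>j\<in>Basis. (h \<bullet> j) * (\<Sum>l\<in>Basis. (h \<bullet> l) * c j l)\<bar>
    \<le> (norm h)\<^sup>2 * (\<Sum>j\<in>Basis. \<Sum>l\<in>Basis. C j l)"
proof -
  have "\<bar>(h \<bullet> j) * (\<Sum>l\<in>Basis. (h \<bullet> l) * c j l)\<bar> \<le> norm h * (\<Sum>l\<in>Basis. norm h * C j l)"
    if j: "j \<in> Basis" for j
  proof -
    have "\<bar>\<Sum>l\<in>Basis. (h \<bullet> l) * c j l\<bar> \<le> (\<Sum>l\<in>Basis. \<bar>(h \<bullet> l) * c j l\<bar>)" by (rule sum_abs)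
    also have "\<dots> \<le> (\<Sum>l\<in>Basis. norm h * C j l)"
      unfolding abs_mult using assms[OF j] Basis_le_norm by (intro sum_mono mult_mono) auto
    finally show ?thesis
      unfolding abs_mult using Basis_le_norm[OF j] by (intro mult_mono) auto
  qed
  then have "\<bar>\<Sum>j\<in>Basis. (h \<bullet> j) * (\<Sum>l\<in>Basis. (h \<bullet> l) * c j l)\<bar>
      \<le> (\<Sum>j\<in>Basis. norm h * (\<Sum>l\<in>Basis. norm h * C j l))"
    by (intro order_trans[OF sum_abs] sum_mono)
  also have "\<dots> = (norm h)\<^sup>2 * (\<Sum>j\<in>Basis. \<Sum>l\<in>Basis. C j l)"
    by (simp add: power2_eq_square sum_distrib_left mult.assoc)
  finally show ?thesis .
qed

lemma bounded_linear_integral_linear: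
  fixes f :: "'b \<Rightarrow> 'a::euclidean_space \<Rightarrow> real"
  assumes "\<And>y. linear (f y)" and "\<And>v. integrable M (\<lambda>y. f y v)"
  shows "bounded_linear (\<lambda>v. \<integral>y. f y v \<partial>M)"
proof -
  have "linear (\<lambda>v. \<integral>y. f y v \<partial>M)"
  proof
    show "(\<integral>y. f y (u + v) \<partial>M) = (\<integral>y. f y u \<partial>M) + (\<integral>y. f y v \<partial>M)" for u v
      using assms by (simp add: linear_add)
    show "(\<integral>y. f y (c *\<^sub>R v) \<partial>M) = c *\<^sub>R (\<integral>y. f y v \<partial>M)" for c v
      using assms by (simp add: linear_scale)
  qed
  then show ?thesis by (simp add: linear_conv_bounded_linear)
qed

definition conv_powr :: "real \<Rightarrow> ((real^'n) \<times> real \<Rightarrow> real) \<Rightarrow> (real^'n) \<times> real \<Rightarrow> real" where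
  "conv_powr a K p = (\<integral>y. K (fst p - y, snd p) * norm y powr -a \<partial>lborel)"

lemma conv_powr_cong:
  assumes "0 < snd p" "\<And>q. 0 < snd q \<Longrightarrow> K q = K' q"
  shows "conv_powr a K p = conv_powr a K' p"
  unfolding conv_powr_def using assms by (intro Bochner_Integration.integral_cong) auto

lemma laurent_Phi_conv_integrable:
  fixes P :: "(real^'n) \<times> real \<Rightarrow> real" and x :: "real^'n" and a :: real
  assumes P: "P \<in> laurent_polys" and t: "0 < t" and a: "0 \<le> a" "a < CARD('n)"
  shows "integrable lborel (\<lambda>y. P (x - y, t) * Phi (x - y, t) * norm y powr -a)"
proof -
  obtain C where C: "0 \<le> C" "\<forall>x' t' y. norm (x' - x) \<le> 1 \<and> t / 2 \<le> t' \<and> t' \<le> 3 * t / 2 \<longrightarrow>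
      \<bar>P (x' - y, t') * Phi (x' - y, t')\<bar> \<le> C * exp (- (1 / (24 * t)) * (norm y)\<^sup>2)"
    using laurent_Phi_local_bound[OF P t, of x] by blast
  show ?thesis
  proof (rule Bochner_Integration.integrable_bound)
    show "integrable lborel (\<lambda>y::real^'n. C * (exp (- (1 / (24 * t)) * (norm y)\<^sup>2) * norm y powr -a))"
      using gauss_norm_powr_integrable[where 'a="real^'n", of "1 / (24 * t)" a] t a
      by (intro integrable_mult_right) auto
    have [measurable]: "P \<in> borel_measurable borel" by (rule laurent_polys_measurable[OF P])
    show "(\<lambda>y. P (x - y, t) * Phi (x - y, t) * norm y powr -a) \<in> borel_measurable lborel"
      by measurable
    have "\<bar>P (x - y, t) * Phi (x - y, t)\<bar> * norm y powr -a
        \<le> C * exp (- (1 / (24 * t)) * (norm y)\<^sup>2) * norm y powr -a" for y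
      using C(2) t by (intro mult_right_mono) auto
    then show "AE y in lborel. norm (P (x - y, t) * Phi (x - y, t) * norm y powr -a)
        \<le> norm (C * (exp (- (1 / (24 * t)) * (norm y)\<^sup>2) * norm y powr -a))"
      using C(1) by (simp add: abs_mult mult.assoc)
  qed
qed

lemma linear_real_basis_expansion:
  fixes G :: "'a::euclidean_space \<Rightarrow> real"
  assumes "linear G"
  shows "G v = (\<Sum>j\<in>Basis. (v \<bullet> j) * G j)"
  using Linear_Algebra.linear_componentwise[OF assms, of v 1] by simp

lemma segment_in_time_slab:
  fixes h :: "'a::real_normed_vector \<times> real"
  assumes h: "norm h < min 1 (t0 / 2)" and s: "0 \<le> s" "s \<le> 1"
  shows "norm (s *\<^sub>R fst h) \<le> 1" "t0 / 2 \<le> t0 + s * snd h" "t0 + s * snd h \<le> 3 * t0 / 2"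
proof -
  have hx: "norm (fst h) \<le> norm h" and ht: "\<bar>snd h\<bar> \<le> norm h"
    using norm_fst_le[of "fst h" "snd h"] norm_snd_le[of "snd h" "fst h"] by simp_all
  have "s * norm (fst h) \<le> 1" using s h hx by (intro mult_le_one) auto
  moreover have "s * \<bar>snd h\<bar> \<le> \<bar>snd h\<bar>" using s by (intro mult_left_le_one_le) auto
  ultimately have "norm (s *\<^sub>R fst h) \<le> 1" "\<bar>s * snd h\<bar> \<le> t0 / 2"
    using s h ht by (auto simp: abs_mult)
  then show "norm (s *\<^sub>R fst h) \<le> 1" "t0 / 2 \<le> t0 + s * snd h" "t0 + s * snd h \<le> 3 * t0 / 2"
    by (auto simp: abs_le_iff)
qed

lemma laurent_Phi_second_derivatives:
  fixes P :: "(real^'n) \<times> real \<Rightarrow> real"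
  assumes D: "\<And>q. 0 < snd q \<Longrightarrow> ((\<lambda>q. P q * Phi q) has_derivative D q) (at q)"
    and DP: "\<And>v. \<exists>P'\<in>laurent_polys. \<forall>q. 0 < snd q \<longrightarrow> D q v = P' q * Phi q"
  shows "\<exists>D2. (\<forall>j q. 0 < snd q \<longrightarrow> ((\<lambda>q. D q j) has_derivative D2 j q) (at q)) \<and>
    (\<forall>j l. \<exists>P2\<in>laurent_polys. \<forall>q. 0 < snd q \<longrightarrow> D2 j q l = P2 q * Phi q)"
proof -
  have "\<exists>D2. (\<forall>q. 0 < snd q \<longrightarrow> ((\<lambda>q. D q j) has_derivative D2 q) (at q)) \<and>
      (\<forall>l. \<exists>P2\<in>laurent_polys. \<forall>q. 0 < snd q \<longrightarrow> D2 q l = P2 q * Phi q)" for j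
  proof -
    obtain P1 where P1: "P1 \<in> laurent_polys" "\<forall>q. 0 < snd q \<longrightarrow> D q j = P1 q * Phi q"
      using DP by blast
    obtain D1 where D1: "\<forall>q. 0 < snd q \<longrightarrow> ((\<lambda>q. P1 q * Phi q) has_derivative D1 q) (at q)"
      and D1P: "\<forall>l. \<exists>P2\<in>laurent_polys. \<forall>q. 0 < snd q \<longrightarrow> D1 q l = P2 q * Phi q"
      using laurent_Phi_has_derivative[OF P1(1)] by blast
    have "((\<lambda>q. D q j) has_derivative D1 q) (at q)" if "0 < snd q" for q
      by (rule has_derivative_transform_within_open[OF D1[rule_format, OF that] open_pos_time])
        (use that P1(2) in auto)
    with D1P show ?thesis by blast
  qed
  then have "\<forall>j. \<exists>D2. (\<forall>q. 0 < snd q \<longrightarrow> ((\<lambda>q. D q j) has_derivative D2 q) (at q)) \<and>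
      (\<forall>l. \<exists>P2\<in>laurent_polys. \<forall>q. 0 < snd q \<longrightarrow> D2 q l = P2 q * Phi q)"
    by blast
  from choice[OF this] show ?thesis by blast
qed

lemma laurent_Phi_family_local_bound:
  fixes K :: "'k \<Rightarrow> (real^'n) \<times> real \<Rightarrow> real" and z :: "real^'n"
  assumes K: "\<And>k. \<exists>P\<in>laurent_polys. \<forall>q. 0 < snd q \<longrightarrow> K k q = P q * Phi q" and t0: "0 < t0"
  shows "\<exists>C. \<forall>k. 0 \<le> C k \<and> (\<forall>x t y. norm (x - z) \<le> 1 \<and> t0 / 2 \<le> t \<and> t \<le> 3 * t0 / 2 \<longrightarrow>
    \<bar>K k (x - y, t)\<bar> \<le> C k * exp (- (1 / (24 * t0)) * (norm y)\<^sup>2))"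
proof -
  have "\<exists>C. 0 \<le> C \<and> (\<forall>x t y. norm (x - z) \<le> 1 \<and> t0 / 2 \<le> t \<and> t \<le> 3 * t0 / 2 \<longrightarrow>
      \<bar>K k (x - y, t)\<bar> \<le> C * exp (- (1 / (24 * t0)) * (norm y)\<^sup>2))" for k
  proof -
    obtain P where P: "P \<in> laurent_polys" "\<forall>q. 0 < snd q \<longrightarrow> K k q = P q * Phi q"
      using K by blast
    obtain C where C: "0 \<le> C" "\<forall>x t y. norm (x - z) \<le> 1 \<and> t0 / 2 \<le> t \<and> t \<le> 3 * t0 / 2 \<longrightarrow>
        \<bar>P (x - y, t) * Phi (x - y, t)\<bar> \<le> C * exp (- (1 / (24 * t0)) * (norm y)\<^sup>2)"
      using laurent_Phi_local_bound[OF P(1) t0, of z] by blast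
    have "\<bar>K k (x - y, t)\<bar> \<le> C * exp (- (1 / (24 * t0)) * (norm y)\<^sup>2)"
      if "norm (x - z) \<le> 1" "t0 / 2 \<le> t" "t \<le> 3 * t0 / 2" for x t y
      using C(2) P(2) that t0 by simp
    with C(1) show ?thesis by blast
  qed
  then show ?thesis by (rule choice[OF allI])
qed

lemma laurent_Phi_second_order_remainder:
  fixes P :: "(real^'n) \<times> real \<Rightarrow> real" and z :: "real^'n"
  assumes t0: "0 < t0"
    and D: "\<And>q. 0 < snd q \<Longrightarrow> ((\<lambda>q. P q * Phi q) has_derivative D q) (at q)"
    and DP: "\<And>v. \<exists>P'\<in>laurent_polys. \<forall>q. 0 < snd q \<longrightarrow> D q v = P' q * Phi q"
  shows "\<exists>C\<ge>0. \<forall>h y. norm h < min 1 (t0 / 2) \<longrightarrow>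
    \<bar>P ((z - y, t0) + h) * Phi ((z - y, t0) + h) - P (z - y, t0) * Phi (z - y, t0) - D (z - y, t0) h\<bar>
      \<le> C * (norm h)\<^sup>2 * exp (- (1 / (24 * t0)) * (norm y)\<^sup>2)"
proof -
  define E where "E y = exp (- (1 / (24 * t0)) * (norm y)\<^sup>2)" for y :: "real^'n"
  obtain D2 where D2: "\<And>j q. 0 < snd q \<Longrightarrow> ((\<lambda>q. D q j) has_derivative D2 j q) (at q)"
    and D2P: "\<And>j l. \<exists>P2\<in>laurent_polys. \<forall>q. 0 < snd q \<longrightarrow> D2 j q l = P2 q * Phi q"
    using laurent_Phi_second_derivatives[OF D DP] by blast
  obtain C where C: "\<And>jl. 0 \<le> C jl" "\<And>jl x t y. norm (x - z) \<le> 1 \<Longrightarrow> t0 / 2 \<le> t \<Longrightarrow>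
      t \<le> 3 * t0 / 2 \<Longrightarrow> \<bar>D2 (fst jl) (x - y, t) (snd jl)\<bar> \<le> C jl * E y"
    using laurent_Phi_family_local_bound[where K = "\<lambda>jl q. D2 (fst jl) q (snd jl)", OF D2P t0, of z]
    unfolding E_def by blast
  \<comment> \<open>In the basis, the second derivative along \<open>h\<close> is a quadratic form in \<open>h\<close> whose
    coefficients are dominated by one Gaussian in \<open>y\<close> near \<open>(z, t0)\<close>.\<close>
  define Cs where "Cs = (\<Sum>j\<in>(Basis :: ((real^'n) \<times> real) set). \<Sum>l\<in>Basis. C (j, l))"
  have "\<bar>P ((z - y, t0) + h) * Phi ((z - y, t0) + h) - P (z - y, t0) * Phi (z - y, t0) - D (z - y, t0) h\<bar>
      \<le> (norm h)\<^sup>2 * (Cs * E y)"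
    if h: "norm h < min 1 (t0 / 2)" for h y
  proof (rule second_order_remainder_bound[where F = "\<lambda>q. P q * Phi q"])
    fix s :: real assume s: "0 \<le> s" "s \<le> 1"
    define q where "q = (z - y, t0) + s *\<^sub>R h"
    have q: "q = ((z + s *\<^sub>R fst h) - y, t0 + s * snd h)" by (simp add: q_def prod_eq_iff)
    have pos: "0 < snd q" using segment_in_time_slab[OF h s] t0 by (simp add: q)
    show "((\<lambda>q. P q * Phi q) has_derivative D q) (at q)" by (rule D[OF pos])
    have "((\<lambda>q. \<Sum>j\<in>Basis. (h \<bullet> j) * D q j) has_derivative (\<lambda>w. \<Sum>j\<in>Basis. (h \<bullet> j) * D2 j q w)) (at q)"
      by (intro has_derivative_sum has_derivative_mult_right D2 pos)
    moreover have "D q' h = (\<Sum>j\<in>Basis. (h \<bullet> j) * D q' j)" if "0 < snd q'" for q'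
      by (rule linear_real_basis_expansion[OF has_derivative_linear[OF D[OF that]]])
    ultimately show "((\<lambda>q. D q h) has_derivative (\<lambda>w. \<Sum>j\<in>Basis. (h \<bullet> j) * D2 j q w)) (at q)"
      by (rule_tac has_derivative_transform_within_open[OF _ open_pos_time]) (use pos in auto)
    have "D2 j q h = (\<Sum>l\<in>Basis. (h \<bullet> l) * D2 j q l)" for j
      by (rule linear_real_basis_expansion[OF has_derivative_linear[OF D2[OF pos]]])
    then have "(\<Sum>j\<in>Basis. (h \<bullet> j) * D2 j q h) = (\<Sum>j\<in>Basis. (h \<bullet> j) * (\<Sum>l\<in>Basis. (h \<bullet> l) * D2 j q l))"
      by simp
    also have "\<bar>\<dots>\<bar> \<le> (norm h)\<^sup>2 * (\<Sum>j\<in>Basis. \<Sum>l\<in>Basis. C (j, l) * E y)"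
    proof (rule abs_basis_quadratic_form_le[where c = "\<lambda>j l. D2 j q l" and C = "\<lambda>j l. C (j, l) * E y"])
      show "\<bar>D2 j q l\<bar> \<le> C (j, l) * E y" for j l
        using C(2)[of "z + s *\<^sub>R fst h" "t0 + s * snd h" "(j, l)" y] segment_in_time_slab[OF h s]
        by (simp add: q)
    qed
    finally show "\<bar>\<Sum>j\<in>Basis. (h \<bullet> j) * D2 j q h\<bar> \<le> (norm h)\<^sup>2 * (Cs * E y)"
      by (simp add: Cs_def sum_distrib_right)
  qed
  moreover have "0 \<le> Cs" unfolding Cs_def using C(1) by (intro sum_nonneg) auto
  ultimately show ?thesis by (intro exI[of _ Cs]) (simp add: E_def mult_ac)
qed

lemma laurent_Phi_derivative_conv_integrable:
  fixes D :: "(real^'n) \<times> real \<Rightarrow> (real^'n) \<times> real \<Rightarrow> real" and a :: real and x :: "real^'n"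
  assumes DP: "\<exists>P'\<in>laurent_polys. \<forall>q. 0 < snd q \<longrightarrow> D q v = P' q * Phi q"
    and t: "0 < t" and a: "0 \<le> a" "a < CARD('n)"
  shows "integrable lborel (\<lambda>y. D (x - y, t) v * norm y powr -a)"
proof -
  obtain P' where P': "P' \<in> laurent_polys" "\<forall>q. 0 < snd q \<longrightarrow> D q v = P' q * Phi q"
    using DP by blast
  then have "(\<lambda>y. D (x - y, t) v * norm y powr -a) = (\<lambda>y. P' (x - y, t) * Phi (x - y, t) * norm y powr -a)"
    using t by simp
  then show ?thesis using laurent_Phi_conv_integrable[OF P'(1) t a, of x] by (simp only:)
qed

lemma bounded_linear_conv_powr_derivative:
  fixes D :: "(real^'n) \<times> real \<Rightarrow> (real^'n) \<times> real \<Rightarrow> real" and a :: real and p :: "(real^'n) \<times> real"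
  assumes a: "0 \<le> a" "a < CARD('n)" and p: "0 < snd p"
    and D: "\<And>q. 0 < snd q \<Longrightarrow> (K has_derivative D q) (at q)"
    and DP: "\<And>v. \<exists>P'\<in>laurent_polys. \<forall>q. 0 < snd q \<longrightarrow> D q v = P' q * Phi q"
  shows "bounded_linear (\<lambda>v. conv_powr a (\<lambda>q. D q v) p)"
  unfolding conv_powr_def
proof (rule bounded_linear_integral_linear)
  show "integrable lborel (\<lambda>y. D (fst p - y, snd p) v * norm y powr -a)" for v
    by (rule laurent_Phi_derivative_conv_integrable[OF DP p a])
  fix y
  have "linear (D (fst p - y, snd p))" using D[of "(fst p - y, snd p)"] p by (simp add: has_derivative_linear)
  from linear_compose[OF this bounded_linear.linear[OF bounded_linear_mult_left[of "norm y powr -a"]]]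
  show "linear (\<lambda>v. D (fst p - y, snd p) v * norm y powr -a)" by (simp add: o_def)
qed

lemma conv_powr_laurent_Phi_has_derivative:
  fixes P :: "(real^'n) \<times> real \<Rightarrow> real" and a :: real and p :: "(real^'n) \<times> real"
  assumes P: "P \<in> laurent_polys" and a: "0 \<le> a" "a < CARD('n)" and p: "0 < snd p"
    and D: "\<And>q. 0 < snd q \<Longrightarrow> ((\<lambda>q. P q * Phi q) has_derivative D q) (at q)"
    and DP: "\<And>v. \<exists>P'\<in>laurent_polys. \<forall>q. 0 < snd q \<longrightarrow> D q v = P' q * Phi q"
  shows "(conv_powr a (\<lambda>q. P q * Phi q) has_derivative (\<lambda>v. conv_powr a (\<lambda>q. D q v) p)) (at p)"
proof -
  obtain x0 t0 where p_eq: "p = (x0, t0)" by (cases p)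
  have t0: "0 < t0" using p p_eq by simp
  define w where "w y = norm y powr -a" for y :: "real^'n"
  define K where "K q = P q * Phi q" for q
  define E where "E y = exp (- (1 / (24 * t0)) * (norm y)\<^sup>2)" for y :: "real^'n"
  define L where "L v = conv_powr a (\<lambda>q. D q v) p" for v
  have shift: "(x0 - y, t0) + h = (x0 + fst h - y, t0 + snd h)" for y h
    by (simp add: prod_eq_iff)
  have intK: "integrable lborel (\<lambda>y. K ((x0 - y, t0) + h) * w y)" if "0 < t0 + snd h" for h
    using laurent_Phi_conv_integrable[OF P that a, of "x0 + fst h"]
    by (simp only: K_def w_def shift mult.assoc)
  have intD: "integrable lborel (\<lambda>y. D (x0 - y, t0) v * w y)" for v
    unfolding w_def by (rule laurent_Phi_derivative_conv_integrable[OF DP t0 a])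
  obtain C where C: "0 \<le> C" "\<forall>h y. norm h < min 1 (t0 / 2) \<longrightarrow>
      \<bar>K ((x0 - y, t0) + h) - K (x0 - y, t0) - D (x0 - y, t0) h\<bar> \<le> C * (norm h)\<^sup>2 * E y"
    using laurent_Phi_second_order_remainder[where D = D and z = x0, OF t0 D DP]
    unfolding K_def E_def by blast
  have "norm (conv_powr a K (p + h) - conv_powr a K p - L h)
      \<le> (C * (\<integral>y. E y * w y \<partial>lborel)) * (norm h)\<^sup>2" if h: "norm h < min 1 (t0 / 2)" for h
  proof -
    have th: "0 < t0 + snd h"
      using h norm_snd_le[of "snd h" "fst h"] t0 by (simp add: abs_le_iff)
    have "conv_powr a K (p + h) - conv_powr a K p - L h
        = (\<integral>y. K ((x0 - y, t0) + h) * w y \<partial>lborel) - (\<integral>y. K ((x0 - y, t0) + 0) * w y \<partial>lborel)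
          - (\<integral>y. D (x0 - y, t0) h * w y \<partial>lborel)"
      by (simp only: conv_powr_def p_eq w_def L_def shift fst_add snd_add fst_zero snd_zero
          add_0_right fst_conv snd_conv)
    also have "\<dots> = (\<integral>y. (K ((x0 - y, t0) + h) - K (x0 - y, t0) - D (x0 - y, t0) h) * w y \<partial>lborel)"
      using intK[OF th] intK[of 0] intD[of h] t0 by (simp add: left_diff_distrib)
    also have "norm \<dots> \<le> (\<integral>y. C * (norm h)\<^sup>2 * (E y * w y) \<partial>lborel)"
    proof (rule Bochner_Integration.integral_norm_bound_integral)
      show "integrable lborel (\<lambda>y. C * (norm h)\<^sup>2 * (E y * w y))"
        using gauss_norm_powr_integrable[where 'a="real^'n", of "1 / (24 * t0)" a] t0 a
        by (simp add: E_def w_def)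
      show "integrable lborel (\<lambda>y. (K ((x0 - y, t0) + h) - K (x0 - y, t0) - D (x0 - y, t0) h) * w y)"
        using intK[OF th] intK[of 0] intD[of h] t0 by (simp add: left_diff_distrib)
      show "norm ((K ((x0 - y, t0) + h) - K (x0 - y, t0) - D (x0 - y, t0) h) * w y)
          \<le> C * (norm h)\<^sup>2 * (E y * w y)" for y
        using mult_right_mono[OF C(2)[rule_format, OF h, of y], of "w y"]
        by (simp add: abs_mult w_def mult.assoc)
    qed
    also have "\<dots> = (C * (\<integral>y. E y * w y \<partial>lborel)) * (norm h)\<^sup>2" by simp
    finally show ?thesis .
  qed
  moreover have "bounded_linear L"
    unfolding L_def by (rule bounded_linear_conv_powr_derivative[OF a p D DP])
  moreover have "0 < min 1 (t0 / 2)" using t0 by simp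
  ultimately have "(conv_powr a K has_derivative L) (at p)"
    by (intro has_derivative_of_quadratic_remainder)
  then show ?thesis by (simp add: K_def[abs_def] L_def[abs_def])
qed

section \<open>Smoothness and the heat equation\<close>

lemma conv_powr_laurent_Phi_derivatives:
  fixes P :: "(real^'n) \<times> real \<Rightarrow> real" and a :: real
  assumes P: "P \<in> laurent_polys" and a: "0 \<le> a" "a < CARD('n)"
  shows "\<exists>D. (\<forall>p. 0 < snd p \<longrightarrow> (conv_powr a (\<lambda>q. P q * Phi q) has_derivative D p) (at p)) \<and>
             (\<forall>v. \<exists>P'\<in>laurent_polys. \<forall>p. 0 < snd p \<longrightarrow> D p v = conv_powr a (\<lambda>q. P' q * Phi q) p)"
proof -
  obtain D where D: "\<forall>q. 0 < snd q \<longrightarrow> ((\<lambda>q. P q * Phi q) has_derivative D q) (at q)"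
    and DP: "\<forall>v. \<exists>P'\<in>laurent_polys. \<forall>q. 0 < snd q \<longrightarrow> D q v = P' q * Phi q"
    using laurent_Phi_has_derivative[OF P] by blast
  show ?thesis
  proof (intro exI[of _ "\<lambda>p v. conv_powr a (\<lambda>q. D q v) p"] conjI allI impI)
    show "(conv_powr a (\<lambda>q. P q * Phi q) has_derivative (\<lambda>v. conv_powr a (\<lambda>q. D q v) p)) (at p)"
      if "0 < snd p" for p
      using D DP by (intro conv_powr_laurent_Phi_has_derivative[OF P a that]) auto
    show "\<exists>P'\<in>laurent_polys. \<forall>p. 0 < snd p \<longrightarrow> conv_powr a (\<lambda>q. D q v) p = conv_powr a (\<lambda>q. P' q * Phi q) p"
      for v
    proof -
      obtain P' where "P' \<in> laurent_polys" "\<forall>q. 0 < snd q \<longrightarrow> D q v = P' q * Phi q"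
        using DP by blast
      then show ?thesis by (intro bexI[of _ P'] allI impI conv_powr_cong) auto
    qed
  qed
qed

lemma iter_dderiv_conv_powr_Phi:
  fixes a :: real and vs :: "((real^'n) \<times> real) list"
  assumes a: "0 \<le> a" "a < CARD('n)"
  shows "\<exists>P\<in>laurent_polys. \<forall>p. 0 < snd p \<longrightarrow>
           iter_dderiv (conv_powr a Phi) vs p = conv_powr a (\<lambda>q. P q * Phi q) p"
proof (induction vs)
  case Nil
  show ?case by (rule bexI[of _ "\<lambda>q. 1"]) (auto intro: laurent_polys.const)
next
  case (Cons v vs)
  then obtain P where P: "P \<in> laurent_polys"
    "\<forall>p. 0 < snd p \<longrightarrow> iter_dderiv (conv_powr a Phi) vs p = conv_powr a (\<lambda>q. P q * Phi q) p"
    by blast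
  obtain D where D: "\<forall>p. 0 < snd p \<longrightarrow> (conv_powr a (\<lambda>q. P q * Phi q) has_derivative D p) (at p)"
    and DP: "\<forall>v. \<exists>P'\<in>laurent_polys. \<forall>p. 0 < snd p \<longrightarrow> D p v = conv_powr a (\<lambda>q. P' q * Phi q) p"
    using conv_powr_laurent_Phi_derivatives[OF P(1) a] by blast
  obtain P' where P': "P' \<in> laurent_polys"
    "\<forall>p. 0 < snd p \<longrightarrow> D p v = conv_powr a (\<lambda>q. P' q * Phi q) p"
    using DP by blast
  have "iter_dderiv (conv_powr a Phi) (v # vs) p = conv_powr a (\<lambda>q. P' q * Phi q) p"
    if p: "0 < snd p" for p
  proof -
    have "(iter_dderiv (conv_powr a Phi) vs has_derivative D p) (at p)"
      by (rule has_derivative_transform_within_open[OF D[rule_format, OF p] open_pos_time])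
        (use P(2) p in auto)
    then show ?thesis using P'(2)[rule_format, OF p] by (simp add: frechet_derivative_at[symmetric])
  qed
  then show ?case using P'(1) by blast
qed

lemma smooth_on_conv_powr_Phi:
  fixes a :: real
  assumes a: "0 \<le> a" "a < CARD('n)"
  shows "smooth_on (UNIV \<times> {0<..}) (conv_powr a (Phi :: (real^'n) \<times> real \<Rightarrow> real))"
  unfolding smooth_on_def
proof (intro allI ballI)
  fix vs :: "((real^'n) \<times> real) list" and p :: "(real^'n) \<times> real"
  assume "p \<in> UNIV \<times> {0<..}"
  then have p: "0 < snd p" by auto
  obtain P where P: "P \<in> laurent_polys"
    "\<forall>p. 0 < snd p \<longrightarrow> iter_dderiv (conv_powr a Phi) vs p = conv_powr a (\<lambda>q. P q * Phi q) p"
    using iter_dderiv_conv_powr_Phi[OF a, of vs] by blast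
  obtain D where "(conv_powr a (\<lambda>q. P q * Phi q) has_derivative D) (at p)"
    using conv_powr_laurent_Phi_derivatives[OF P(1) a] p by blast
  then have "(iter_dderiv (conv_powr a Phi) vs has_derivative D) (at p)"
    by (rule has_derivative_transform_within_open[OF _ open_pos_time]) (use p P(2) in auto)
  then show "iter_dderiv (conv_powr a Phi) vs differentiable (at p)"
    by (auto simp: differentiable_def)
qed

lemma conv_powr_laurent_Phi_sum:
  fixes a :: real and p :: "(real^'n) \<times> real"
  assumes "finite I" "\<And>i. i \<in> I \<Longrightarrow> Q i \<in> laurent_polys" "0 < snd p" "0 \<le> a" "a < CARD('n)"
  shows "(\<Sum>i\<in>I. conv_powr a (\<lambda>q. Q i q * Phi q) p) = conv_powr a (\<lambda>q. \<Sum>i\<in>I. Q i q * Phi q) p"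
  unfolding conv_powr_def
  using assms
  by (subst Bochner_Integration.integral_sum[symmetric])
    (auto intro!: laurent_Phi_conv_integrable simp: sum_distrib_right)

lemma conv_powr_Phi_has_derivative:
  fixes a :: real and p :: "(real^'n) \<times> real"
  assumes a: "0 \<le> a" "a < CARD('n)" and p: "0 < snd p"
  shows "(conv_powr a Phi has_derivative (\<lambda>v. conv_powr a (\<lambda>q. Phi q * Phi_log_deriv q v) p)) (at p)"
proof -
  have "(conv_powr a (\<lambda>q. 1 * Phi q) has_derivative (\<lambda>v. conv_powr a (\<lambda>q. Phi q * Phi_log_deriv q v) p)) (at p)"
  proof (rule conv_powr_laurent_Phi_has_derivative[OF laurent_polys.const a p])
    show "((\<lambda>q. 1 * Phi q) has_derivative (\<lambda>v. Phi q * Phi_log_deriv q v)) (at q)" if "0 < snd q" for q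
      using Phi_has_derivative[OF that] by simp
    show "\<exists>P'\<in>laurent_polys. \<forall>q. 0 < snd q \<longrightarrow> Phi q * Phi_log_deriv q v = P' q * Phi q" for v
      by (rule bexI[OF _ Phi_log_deriv_laurent[of v]]) (simp add: mult.commute)
  qed
  then show ?thesis by simp
qed

lemma conv_powr_Phi_second_space_derivative:
  fixes a :: real and p :: "(real^'n) \<times> real"
  assumes a: "0 \<le> a" "a < CARD('n)" and p: "0 < snd p"
  shows "iter_dderiv (conv_powr a Phi) [(axis i 1, 0), (axis i 1, 0)] p
    = conv_powr a (\<lambda>q. ((fst q $ i)\<^sup>2 / (4 * (snd q)\<^sup>2) - 1 / (2 * snd q)) * Phi q) p"
proof -
  define X where "X q = - (fst q $ i) / (2 * snd q)" for q :: "(real^'n) \<times> real"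
  define dX where "dX q v = fst q $ i * snd v / (2 * (snd q)\<^sup>2) - fst v $ i / (2 * snd q)"
    for q v :: "(real^'n) \<times> real"
  have X_laurent: "X \<in> laurent_polys"
  proof -
    have "X = (\<lambda>q. (- 1 / 2 * fst q $ i) / snd q)" by (auto simp: X_def fun_eq_iff)
    then show ?thesis by (simp only:) (intro laurent_polys_divide_time laurent_polys.intros)
  qed
  have dX_laurent: "(\<lambda>q. dX q v) \<in> laurent_polys" for v
  proof -
    have "(\<lambda>q. dX q v) = (\<lambda>q. (snd v / 2 * fst q $ i) / snd q / snd q - (fst v $ i / 2) / snd q)"
      by (auto simp: dX_def fun_eq_iff power2_eq_square mult_ac)
    then show ?thesis
      by (simp only:) (intro laurent_polys_diff laurent_polys_divide_time laurent_polys.intros)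
  qed
  have X_deriv: "((\<lambda>q. X q * Phi q) has_derivative (\<lambda>v. (X q * Phi_log_deriv q v + dX q v) * Phi q)) (at q)"
    if "0 < snd q" for q
  proof -
    have "(X has_derivative dX q) (at q)"
      using that unfolding X_def[abs_def] dX_def[abs_def]
      by (auto intro!: derivative_eq_intros simp: fun_eq_iff field_simps power2_eq_square)
    from has_derivative_mult[OF this Phi_has_derivative[OF that]]
    show ?thesis by (simp add: algebra_simps)
  qed
  have first: "iter_dderiv (conv_powr a Phi) [(axis i 1, 0)] p' = conv_powr a (\<lambda>q. X q * Phi q) p'"
    if "0 < snd p'" for p'
    using conv_powr_Phi_has_derivative[OF a that]
    by (simp add: frechet_derivative_at[symmetric] Phi_log_deriv_def X_def inner_axis mult.commute)
  have "(conv_powr a (\<lambda>q. X q * Phi q) has_derivative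
      (\<lambda>v. conv_powr a (\<lambda>q. (X q * Phi_log_deriv q v + dX q v) * Phi q) p)) (at p)"
    by (rule conv_powr_laurent_Phi_has_derivative[OF X_laurent a p X_deriv])
      (auto intro!: bexI laurent_polys.intros X_laurent Phi_log_deriv_laurent dX_laurent)
  then have "(iter_dderiv (conv_powr a Phi) [(axis i 1, 0)] has_derivative
      (\<lambda>v. conv_powr a (\<lambda>q. (X q * Phi_log_deriv q v + dX q v) * Phi q) p)) (at p)"
    by (rule has_derivative_transform_within_open[OF _ open_pos_time]) (use p first in auto)
  then show ?thesis
    by (simp add: frechet_derivative_at[symmetric] Phi_log_deriv_def X_def dX_def inner_axis
        power2_eq_square)
qed

lemma heat_op_conv_powr_Phi:
  fixes a :: real and p :: "(real^'n) \<times> real"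
  assumes a: "0 \<le> a" "a < CARD('n)" and p: "0 < snd p"
  shows "heat_op (conv_powr a Phi) p = 0"
proof -
  define Q where "Q i q = (fst q $ i)\<^sup>2 / (4 * (snd q)\<^sup>2) - 1 / (2 * snd q)" for i and q :: "(real^'n) \<times> real"
  have Q: "Q i \<in> laurent_polys" for i
  proof -
    have "Q i = (\<lambda>q. (1 / 4 * fst q $ i * fst q $ i) / snd q / snd q - (1 / 2) / snd q)"
      by (auto simp: Q_def fun_eq_iff power2_eq_square)
    then show ?thesis
      by (simp only:) (intro laurent_polys_diff laurent_polys_divide_time laurent_polys.intros)
  qed
  have "iter_dderiv (conv_powr a Phi) [(axis i 1, 0), (axis i 1, 0)] p = conv_powr a (\<lambda>q. Q i q * Phi q) p" for i
    unfolding Q_def by (rule conv_powr_Phi_second_space_derivative[OF a p])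
  then have "(\<Sum>i\<in>UNIV. iter_dderiv (conv_powr a Phi) [(axis i 1, 0), (axis i 1, 0)] p)
      = conv_powr a (\<lambda>q. \<Sum>i\<in>UNIV. Q i q * Phi q) p"
    using conv_powr_laurent_Phi_sum[where Q = Q, OF finite Q p a] by simp
  also have "\<dots> = conv_powr a (\<lambda>q. Phi q * Phi_log_deriv q (0, 1)) p"
  proof (rule conv_powr_cong[OF p])
    fix q :: "(real^'n) \<times> real"
    have "(\<Sum>i\<in>UNIV. Q i q) = (\<Sum>i\<in>UNIV. fst q $ i * fst q $ i) / (4 * (snd q)\<^sup>2) - real CARD('n) / (2 * snd q)"
      by (simp add: Q_def sum_subtractf sum_divide_distrib[symmetric] power2_eq_square)
    then show "(\<Sum>i\<in>UNIV. Q i q * Phi q) = Phi q * Phi_log_deriv q (0, 1)"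
      by (subst sum_distrib_right[symmetric]) (simp add: Phi_log_deriv_def inner_vec_def mult.commute)
  qed
  also have "\<dots> = iter_dderiv (conv_powr a Phi) [(0, 1)] p"
    using conv_powr_Phi_has_derivative[OF a p] by (simp add: frechet_derivative_at[symmetric])
  finally show ?thesis by (simp add: heat_op_def)
qed

section \<open>Self-similarity and pointwise bounds\<close>

lemma Phi_scale:
  fixes x z :: "real^'n"
  assumes t: "0 < t"
  shows "Phi (x - sqrt t *\<^sub>R z, t) = t powr (- real CARD('n) / 2) * Phi (x /\<^sub>R sqrt t - z, 1)"
proof -
  have "x - sqrt t *\<^sub>R z = sqrt t *\<^sub>R (x /\<^sub>R sqrt t - z)" using t by (simp add: algebra_simps)
  then have "(norm (x - sqrt t *\<^sub>R z))\<^sup>2 = t * (norm (x /\<^sub>R sqrt t - z))\<^sup>2"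
    using t by (simp add: power_mult_distrib)
  then show ?thesis
    using t by (simp add: Phi_def heat_kernel_def powr_mult)
qed

lemma conv_powr_Phi_scale:
  fixes x :: "real^'n" and a :: real
  assumes t: "0 < t"
  shows "conv_powr a Phi (x, t) = t powr (- a / 2) * conv_powr a Phi (x /\<^sub>R sqrt t, 1)"
proof -
  have s: "0 < sqrt t" using t by simp
  have "conv_powr a Phi (x, t)
      = \<bar>sqrt t\<bar> ^ DIM(real^'n) * (\<integral>z. Phi (x - (0 + sqrt t *\<^sub>R z), t) * norm (0 + sqrt t *\<^sub>R z) powr -a \<partial>lborel)"
    using lborel_integral_affine[where t = 0 and c = "sqrt t", of "\<lambda>y. Phi (x - y, t) * norm y powr -a"] s
    by (simp add: conv_powr_def)
  also have "(\<lambda>z. Phi (x - (0 + sqrt t *\<^sub>R z), t) * norm (0 + sqrt t *\<^sub>R z) powr -a)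
      = (\<lambda>z. (t powr (- real CARD('n) / 2) * sqrt t powr -a) * (Phi (x /\<^sub>R sqrt t - z, 1) * norm z powr -a))"
    using s by (simp add: fun_eq_iff Phi_scale[OF t] powr_mult mult_ac)
  also have "\<bar>sqrt t\<bar> ^ DIM(real^'n) * (\<integral>z. (t powr (- real CARD('n) / 2) * sqrt t powr -a)
      * (Phi (x /\<^sub>R sqrt t - z, 1) * norm z powr -a) \<partial>lborel)
      = (sqrt t ^ CARD('n) * t powr (- real CARD('n) / 2)) * sqrt t powr -a * conv_powr a Phi (x /\<^sub>R sqrt t, 1)"
    unfolding integral_mult_right_zero conv_powr_def fst_conv snd_conv using s by simp
  also have "sqrt t ^ CARD('n) * t powr (- real CARD('n) / 2) = 1"
    using t by (simp add: powr_half_sqrt[symmetric] powr_realpow[symmetric] powr_powr powr_add[symmetric])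
  also have "sqrt t powr -a = t powr (- a / 2)"
    using t by (simp add: powr_half_sqrt[symmetric] powr_powr)
  finally show ?thesis by simp
qed

lemma conv_powr_Phi_integrable:
  fixes x :: "real^'n" and a :: real
  assumes "0 < t" "0 \<le> a" "a < CARD('n)"
  shows "integrable lborel (\<lambda>y. Phi (x - y, t) * norm y powr -a)"
  using laurent_Phi_conv_integrable[OF laurent_polys.const[of 1] assms, of x] by simp

lemma conv_powr_Phi_lower:
  fixes x :: "real^'n" and a :: real
  assumes t: "0 < t" and a: "0 \<le> a" "a < CARD('n)"
  shows "(4 * pi * t) powr (- real CARD('n) / 2) * exp (- (norm x + 1)\<^sup>2 / (4 * t)) * unit_ball_vol CARD('n)
    \<le> conv_powr a Phi (x, t)"
proof -
  define m where "m = (4 * pi * t) powr (- real CARD('n) / 2) * exp (- (norm x + 1)\<^sup>2 / (4 * t))"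
  have "m * indicator (cball 0 1) y \<le> Phi (x - y, t) * norm y powr -a" if "y \<noteq> 0" for y :: "real^'n"
  proof (cases "y \<in> cball 0 1")
    case True
    then have "norm (x - y) \<le> norm x + 1" using norm_triangle_ineq4[of x y] by simp
    then have "(norm (x - y))\<^sup>2 \<le> (norm x + 1)\<^sup>2" by (intro power_mono) auto
    then have "m \<le> Phi (x - y, t)"
      using t by (simp add: m_def Phi_def heat_kernel_def divide_right_mono)
    moreover have "1 powr -a \<le> norm y powr -a"
      using True that a by (intro powr_mono2') auto
    ultimately have "m * 1 \<le> Phi (x - y, t) * norm y powr -a"
      by (intro mult_mono) (auto simp: m_def Phi_nonneg)
    then show ?thesis using True by simp
  qed (simp add: Phi_nonneg)
  then have AE: "AE y in lborel. m * indicator (cball (0::real^'n) 1) y \<le> Phi (x - y, t) * norm y powr -a"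
    using AE_lborel_singleton[of "0::real^'n"] by (auto elim!: eventually_mono)
  have int: "integrable lborel (\<lambda>y. m * indicator (cball (0::real^'n) 1) y)"
    by (intro integrable_mult_right integrable_real_indicator) (auto simp: emeasure_cball)
  have "(\<integral>y. m * indicator (cball (0::real^'n) 1) y \<partial>lborel) \<le> conv_powr a Phi (x, t)"
    unfolding conv_powr_def fst_conv snd_conv
    by (rule integral_mono_AE[OF int conv_powr_Phi_integrable[OF t a] AE])
  then show ?thesis
    using content_cball[of 1 "0::real^'n"] by (simp add: m_def)
qed

lemma conv_powr_Phi_pos:
  fixes x :: "real^'n" and a :: real
  assumes "0 < t" "0 \<le> a" "a < CARD('n)"
  shows "0 < conv_powr a Phi (x, t)"
proof -
  have "0 < (4 * pi * t) powr (- real CARD('n) / 2) * exp (- (norm x + 1)\<^sup>2 / (4 * t)) * unit_ball_vol CARD('n)"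
    using assms(1) by simp
  then show ?thesis using conv_powr_Phi_lower[OF assms, of x] by linarith
qed

lemma Phi_one: "Phi (z, 1) = (4 * pi) powr (- real CARD('n) / 2) * exp (- (1 / 4) * (norm (z::real^'n))\<^sup>2)"
  by (simp add: Phi_def heat_kernel_def)

lemma Phi_one_le: "Phi (z::real^'n, 1) \<le> (4 * pi) powr (- real CARD('n) / 2)"
  unfolding Phi_one by (simp add: mult_left_le)

lemma Phi_one_shift_integrable:
  fixes x :: "real^'n"
  shows "integrable lborel (\<lambda>y. Phi (x - y, 1))"
proof -
  \<comment> \<open>\<open>0 powr 0 = 0\<close>, so the weight \<open>norm y powr -0\<close> equals 1 only almost everywhere.\<close>
  have "integrable lborel (\<lambda>z::real^'n. exp (- (1 / 4) * (norm z)\<^sup>2) * norm z powr -0)"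
    by (rule gauss_norm_powr_integrable) auto
  moreover have "AE z in lborel. exp (- (1 / 4) * (norm (z::real^'n))\<^sup>2) * norm z powr -0 = exp (- (1 / 4) * (norm z)\<^sup>2)"
    using AE_lborel_singleton[of "0::real^'n"] by eventually_elim simp
  ultimately have "integrable lborel (\<lambda>z::real^'n. exp (- (1 / 4) * (norm z)\<^sup>2))"
    by (subst integrable_cong_AE[symmetric]) auto
  then have "integrable lborel (\<lambda>z::real^'n. Phi (z, 1))"
    unfolding Phi_one by (rule integrable_mult_right)
  from lborel_integrable_affine[OF this, of "-1" x] show ?thesis by simp
qed

lemma Phi_one_shift_integral:
  fixes x :: "real^'n"
  shows "(\<integral>y. Phi (x - y, 1) \<partial>lborel) = (\<integral>z. Phi (z :: real^'n, 1) \<partial>lborel)"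
  using lborel_integral_affine[where t = x and c = "-1", of "\<lambda>z. Phi (z, 1)"] by simp

lemma conv_powr_Phi_one_bounded:
  fixes a :: real
  assumes a: "0 \<le> a" "a < CARD('n)"
  shows "\<exists>C. \<forall>\<xi>::real^'n. conv_powr a Phi (\<xi>, 1) \<le> C"
proof (intro exI allI)
  fix \<xi> :: "real^'n"
  define A where "A = (4 * pi) powr (- real CARD('n) / 2)"
  have "Phi (\<xi> - y, 1) * norm y powr -a \<le> A * (indicator (cball 0 1) y * norm y powr -a) + Phi (\<xi> - y, 1)"
    for y :: "real^'n"
  proof (cases "y \<in> cball 0 1")
    case True
    then show ?thesis
      using mult_right_mono[OF Phi_one_le[of "\<xi> - y"], of "norm y powr -a"] Phi_nonneg[of "(\<xi> - y, 1)"]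
      by (simp add: A_def)
  next
    case False
    then have "norm y powr -a \<le> 1 powr -a" using a by (intro powr_mono2') auto
    from mult_left_mono[OF this Phi_nonneg[of "(\<xi> - y, 1)"]] False show ?thesis by simp
  qed
  then have "conv_powr a Phi (\<xi>, 1)
      \<le> (\<integral>y. A * (indicator (cball 0 1) y * norm y powr -a) + Phi (\<xi> - y, 1) \<partial>lborel)"
    unfolding conv_powr_def fst_conv snd_conv
    by (intro integral_mono conv_powr_Phi_integrable Bochner_Integration.integrable_add
        integrable_mult_right norm_powr_ball_integrable Phi_one_shift_integrable) (use a in auto)
  also have "\<dots> = A * (\<integral>y. indicator (cball (0::real^'n) 1) y * norm y powr -a \<partial>lborel)
      + (\<integral>z. Phi (z :: real^'n, 1) \<partial>lborel)"
    using a by (simp add: norm_powr_ball_integrable Phi_one_shift_integrable Phi_one_shift_integral)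
  finally show "conv_powr a Phi (\<xi>, 1) \<le> \<dots>" .
qed

lemma Phi_one_norm_powr_split_le:
  fixes \<xi> y :: "real^'n" and a :: real
  assumes a: "0 \<le> a" and \<xi>: "\<xi> \<noteq> 0"
  shows "Phi (\<xi> - y, 1) * norm y powr -a \<le> 2 powr a * norm \<xi> powr -a * Phi (\<xi> - y, 1)
    + (4 * pi) powr (- real CARD('n) / 2) * exp (- (norm \<xi>)\<^sup>2 / 16)
      * (indicator (cball 0 1) y * norm y powr -a + indicator (cball 0 (norm \<xi> / 2)) y)"
    (is "_ \<le> ?near + ?A * ?e * ?w")
proof -
  define r where "r = norm \<xi>"
  have r: "0 < r" using \<xi> by (simp add: r_def)
  have far_nonneg: "0 \<le> ?A * ?e * ?w" by (intro mult_nonneg_nonneg add_nonneg_nonneg) auto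
  have near_nonneg: "0 \<le> ?near" by (simp add: Phi_nonneg)
  have near: "Phi (\<xi> - y, 1) * norm y powr -a \<le> ?near" if "r / 2 \<le> norm y"
  proof -
    have "norm y powr -a \<le> (r / 2) powr -a" using that r a by (intro powr_mono2') auto
    also have "\<dots> = 2 powr a * r powr -a" using r by (simp add: powr_divide powr_minus_divide)
    finally have "norm y powr -a \<le> 2 powr a * r powr -a" .
    from mult_left_mono[OF this Phi_nonneg[of "(\<xi> - y, 1)"]] show ?thesis
      by (simp add: r_def mult_ac)
  qed
  have far: "Phi (\<xi> - y, 1) * norm y powr -a \<le> ?A * ?e * ?w" if y: "norm y < r / 2"
  proof -
    have "r / 2 \<le> norm (\<xi> - y)" using y norm_triangle_ineq2[of \<xi> y] unfolding r_def by linarith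
    then have "(r / 2)\<^sup>2 \<le> (norm (\<xi> - y))\<^sup>2" using r by (intro power_mono) auto
    then have "Phi (\<xi> - y, 1) \<le> ?A * ?e"
      unfolding Phi_one r_def by (intro mult_left_mono) (auto simp: power_divide)
    moreover have "norm y powr -a \<le> ?w"
    proof (cases "norm y \<le> 1")
      case False
      then have "norm y powr -a \<le> 1 powr -a" using a by (intro powr_mono2') auto
      then show ?thesis using False y by (simp add: r_def)
    qed simp
    ultimately show ?thesis by (intro mult_mono) (auto simp: Phi_nonneg)
  qed
  show ?thesis
  proof (cases "r / 2 \<le> norm y")
    case True
    show ?thesis by (rule add_increasing2[OF far_nonneg near[OF True]])
  next
    case False
    then show ?thesis by (intro add_increasing[OF near_nonneg far]) simp
  qed
qed

lemma conv_powr_Phi_one_split_bound: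
  fixes \<xi> :: "real^'n" and a :: real
  assumes a: "0 \<le> a" "a < CARD('n)" and \<xi>: "\<xi> \<noteq> 0"
  shows "conv_powr a Phi (\<xi>, 1) \<le> 2 powr a * norm \<xi> powr -a * (\<integral>z. Phi (z :: real^'n, 1) \<partial>lborel)
    + (4 * pi) powr (- real CARD('n) / 2) * exp (- (norm \<xi>)\<^sup>2 / 16)
      * ((\<integral>y. indicator (cball (0::real^'n) 1) y * norm y powr -a \<partial>lborel)
         + unit_ball_vol CARD('n) * (norm \<xi> / 2) ^ CARD('n))"
proof -
  define A where "A = (4 * pi) powr (- real CARD('n) / 2)"
  have fin: "emeasure lborel (cball (0::real^'n) (norm \<xi> / 2)) < top"
    by (simp add: emeasure_cball)
  have int_w: "integrable lborel (\<lambda>y. indicator (cball 0 1) y * norm y powr -a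
      + indicator (cball (0::real^'n) (norm \<xi> / 2)) y)"
    by (intro Bochner_Integration.integrable_add norm_powr_ball_integrable integrable_real_indicator)
      (use a fin in auto)
  have "conv_powr a Phi (\<xi>, 1) \<le> (\<integral>y. 2 powr a * norm \<xi> powr -a * Phi (\<xi> - y, 1)
      + A * exp (- (norm \<xi>)\<^sup>2 / 16) * (indicator (cball 0 1) y * norm y powr -a
        + indicator (cball 0 (norm \<xi> / 2)) y) \<partial>lborel)"
    unfolding conv_powr_def fst_conv snd_conv A_def
    by (intro integral_mono conv_powr_Phi_integrable Phi_one_norm_powr_split_le
        Bochner_Integration.integrable_add integrable_mult_right Phi_one_shift_integrable int_w)
      (use a \<xi> in auto)
  also have "\<dots> = 2 powr a * norm \<xi> powr -a * (\<integral>z. Phi (z :: real^'n, 1) \<partial>lborel)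
      + A * exp (- (norm \<xi>)\<^sup>2 / 16) * ((\<integral>y. indicator (cball (0::real^'n) 1) y * norm y powr -a \<partial>lborel)
         + unit_ball_vol CARD('n) * (norm \<xi> / 2) ^ CARD('n))"
    using int_w norm_powr_ball_integrable[where 'a = "real^'n", of a] a fin
    by (simp add: Phi_one_shift_integrable Phi_one_shift_integral content_cball)
  finally show ?thesis by (simp add: A_def)
qed

lemma conv_powr_Phi_one_decay:
  fixes a :: real
  assumes a: "0 \<le> a" "a < CARD('n)"
  shows "\<exists>C. \<forall>\<xi>::real^'n. \<xi> \<noteq> 0 \<longrightarrow> conv_powr a Phi (\<xi>, 1) \<le> C * norm \<xi> powr -a"
proof -
  define A where "A = (4 * pi) powr (- real CARD('n) / 2)"
  define I where "I = (\<integral>y. indicator (cball (0::real^'n) 1) y * norm y powr -a \<partial>lborel)"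
  define V where "V = unit_ball_vol CARD('n)"
  define G where "G = (\<integral>z. Phi (z :: real^'n, 1) \<partial>lborel)"
  have "0 \<le> I" unfolding I_def by (intro Bochner_Integration.integral_nonneg) auto
  have "0 \<le> V" by (simp add: V_def)
  obtain E where E: "\<And>r. 0 < r \<Longrightarrow> (1 + r) ^ CARD('n) * exp (- (1 / 16) * r\<^sup>2) \<le> E * r powr -a"
    using power_mult_exp_le_powr[OF a(1), of "1 / 16" "CARD('n)"] by auto
  have "conv_powr a Phi (\<xi>, 1) \<le> (2 powr a * G + A * (I + V) * E) * norm \<xi> powr -a"
    if \<xi>: "\<xi> \<noteq> 0" for \<xi> :: "real^'n"
  proof -
    define r where "r = norm \<xi>"
    have r: "0 < r" using \<xi> by (simp add: r_def)
    have "(r / 2) ^ CARD('n) \<le> (1 + r) ^ CARD('n)" "1 \<le> (1 + r) ^ CARD('n)"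
      using r by (auto intro: power_mono)
    then have "I + V * (r / 2) ^ CARD('n) \<le> I * (1 + r) ^ CARD('n) + V * (1 + r) ^ CARD('n)"
      using \<open>0 \<le> I\<close> \<open>0 \<le> V\<close> by (intro add_mono mult_left_mono) (auto simp: mult_le_cancel_left1)
    then have "I + V * (r / 2) ^ CARD('n) \<le> (I + V) * (1 + r) ^ CARD('n)"
      by (simp add: algebra_simps)
    then have "exp (- r\<^sup>2 / 16) * (I + V * (r / 2) ^ CARD('n))
        \<le> exp (- r\<^sup>2 / 16) * ((I + V) * (1 + r) ^ CARD('n))"
      by (rule mult_left_mono) simp
    also have "\<dots> = (I + V) * ((1 + r) ^ CARD('n) * exp (- (1 / 16) * r\<^sup>2))"
      by simp
    also have "\<dots> \<le> (I + V) * (E * r powr -a)"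
      by (rule mult_left_mono[OF E[OF r]]) (use \<open>0 \<le> I\<close> \<open>0 \<le> V\<close> in simp)
    finally have "exp (- r\<^sup>2 / 16) * (I + V * (r / 2) ^ CARD('n)) \<le> (I + V) * E * r powr -a"
      by (simp add: mult.assoc)
    from mult_left_mono[OF this, of A] have "A * exp (- r\<^sup>2 / 16) * (I + V * (r / 2) ^ CARD('n))
        \<le> A * (I + V) * E * r powr -a"
      by (simp add: A_def mult.assoc)
    then show ?thesis
      using conv_powr_Phi_one_split_bound[OF a \<xi>] unfolding A_def[symmetric] I_def[symmetric]
        V_def[symmetric] G_def[symmetric] r_def[symmetric]
      by (simp add: algebra_simps)
  qed
  then show ?thesis by blast
qed

lemma conv_powr_Phi_self_similar_bounds:
  fixes a :: real
  assumes a: "0 \<le> a" "a < CARD('n)"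
  shows "\<exists>c C. 0 < c \<and> 0 < C \<and> (\<forall>(x::real^'n) t. 0 < t \<and> norm x < sqrt t \<longrightarrow>
    c \<le> t powr (a / 2) * conv_powr a Phi (x, t) \<and> t powr (a / 2) * conv_powr a Phi (x, t) \<le> C)"
proof -
  obtain C where C: "\<And>\<xi>::real^'n. conv_powr a Phi (\<xi>, 1) \<le> C"
    using conv_powr_Phi_one_bounded[OF a] by blast
  define c where "c = (4 * pi) powr (- real CARD('n) / 2) * exp (- 1) * unit_ball_vol CARD('n)"
  have "c \<le> t powr (a / 2) * conv_powr a Phi (x, t) \<and> t powr (a / 2) * conv_powr a Phi (x, t) \<le> max C 1"
    if t: "0 < t" and x: "norm x < sqrt t" for x :: "real^'n" and t
  proof -
    have scaled: "t powr (a / 2) * conv_powr a Phi (x, t) = conv_powr a Phi (x /\<^sub>R sqrt t, 1)"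
      using conv_powr_Phi_scale[OF t, of a x] t by (simp add: powr_minus field_simps)
    have "norm x / sqrt t < 1" using x t by (subst divide_less_eq_1_pos) auto
    then have "norm (x /\<^sub>R sqrt t) < 1" using t by (simp add: divide_inverse mult.commute)
    then have "(norm (x /\<^sub>R sqrt t) + 1)\<^sup>2 \<le> 2\<^sup>2" by (intro power_mono) auto
    then have "c \<le> (4 * pi * 1) powr (- real CARD('n) / 2) * exp (- (norm (x /\<^sub>R sqrt t) + 1)\<^sup>2 / (4 * 1))
        * unit_ball_vol CARD('n)"
      unfolding c_def by (intro mult_right_mono mult_left_mono) auto
    also have "\<dots> \<le> conv_powr a Phi (x /\<^sub>R sqrt t, 1)" by (rule conv_powr_Phi_lower[OF _ a]) simp
    finally show ?thesis using scaled C[of "x /\<^sub>R sqrt t"] by simp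
  qed
  moreover have "0 < c" by (simp add: c_def)
  ultimately show ?thesis by (intro exI[of _ c] exI[of _ "max C 1"]) auto
qed

lemma conv_powr_Phi_powr_le:
  fixes a lam :: real
  assumes a: "0 \<le> a" "a < CARD('n)" and lam: "0 < lam"
  shows "\<exists>K\<ge>0. \<forall>(x::real^'n) t. 0 < t \<longrightarrow> \<bar>conv_powr a Phi (x, t)\<bar> powr lam
    \<le> K * (if norm x \<le> sqrt t then t powr (- (a * lam) / 2) else norm x powr - (a * lam))"
proof -
  obtain C0 where C0: "\<And>\<xi>::real^'n. conv_powr a Phi (\<xi>, 1) \<le> C0"
    using conv_powr_Phi_one_bounded[OF a] by blast
  obtain C1' where C1': "\<And>\<xi>::real^'n. \<xi> \<noteq> 0 \<Longrightarrow> conv_powr a Phi (\<xi>, 1) \<le> C1' * norm \<xi> powr -a"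
    using conv_powr_Phi_one_decay[OF a] by blast
  define C1 where "C1 = max C1' 0"
  have C1: "conv_powr a Phi (\<xi>, 1) \<le> C1 * norm \<xi> powr -a" if "\<xi> \<noteq> 0" for \<xi> :: "real^'n"
    using C1'[OF that] mult_right_mono[of C1' C1 "norm \<xi> powr -a"] by (simp add: C1_def)
  have pos: "0 < conv_powr a Phi (x, t)" if "0 < t" for x :: "real^'n" and t
    using conv_powr_Phi_pos[OF that a] .
  have "0 \<le> C0" using C0[of 0] pos[of 1 0] by simp
  have "0 \<le> C1" by (simp add: C1_def)
  define K where "K = max (C0 powr lam) (C1 powr lam)"
  have "\<bar>conv_powr a Phi (x, t)\<bar> powr lam
      \<le> K * (if norm x \<le> sqrt t then t powr (- (a * lam) / 2) else norm x powr - (a * lam))"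
    if t: "0 < t" for x :: "real^'n" and t
  proof -
    have s: "0 < sqrt t" using t by simp
    have scaled: "conv_powr a Phi (x, t) = t powr (- a / 2) * conv_powr a Phi (x /\<^sub>R sqrt t, 1)"
      by (rule conv_powr_Phi_scale[OF t])
    show ?thesis
    proof (cases "norm x \<le> sqrt t")
      case True
      have "conv_powr a Phi (x, t) \<le> t powr (- a / 2) * C0"
        unfolding scaled using C0 by (intro mult_left_mono) auto
      then have "\<bar>conv_powr a Phi (x, t)\<bar> powr lam \<le> (t powr (- a / 2) * C0) powr lam"
        using pos[OF t, of x] lam by (intro powr_mono2) auto
      also have "\<dots> = C0 powr lam * t powr (- (a * lam) / 2)"
        using t \<open>0 \<le> C0\<close> by (simp add: powr_mult powr_powr)
      also have "\<dots> \<le> K * t powr (- (a * lam) / 2)" by (intro mult_right_mono) (auto simp: K_def)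
      finally show ?thesis using True by simp
    next
      case False
      then have "x \<noteq> 0" using t by auto
      have "conv_powr a Phi (x, t) \<le> t powr (- a / 2) * (C1 * norm (x /\<^sub>R sqrt t) powr -a)"
        unfolding scaled using C1[of "x /\<^sub>R sqrt t"] \<open>x \<noteq> 0\<close> s by (intro mult_left_mono) auto
      also have "\<dots> = C1 * norm x powr -a"
        using t s by (simp add: powr_divide powr_minus_divide powr_half_sqrt[symmetric] powr_powr
            divide_simps powr_add[symmetric])
      finally have "\<bar>conv_powr a Phi (x, t)\<bar> powr lam \<le> (C1 * norm x powr -a) powr lam"
        using pos[OF t, of x] lam by (intro powr_mono2) auto
      also have "\<dots> = C1 powr lam * norm x powr - (a * lam)"
        using \<open>0 \<le> C1\<close> by (simp add: powr_mult powr_powr)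
      also have "\<dots> \<le> K * norm x powr - (a * lam)" by (intro mult_right_mono) (auto simp: K_def)
      finally show ?thesis using False by simp
    qed
  qed
  moreover have "0 \<le> K" by (simp add: K_def le_max_iff_disj)
  ultimately show ?thesis by blast
qed

section \<open>Integrability of powers on time slabs\<close>

lemma conv_powr_Phi_powr_set_integrable:
  fixes a lam T :: real
  assumes a: "0 \<le> a" "a < CARD('n)" and lam: "0 < lam"
    and b: "CARD('n) < a * lam" "a * lam < CARD('n) + 2" and T: "0 < T"
  shows "set_integrable lborel (UNIV \<times> {0<..<T}) (\<lambda>p::(real^'n) \<times> real. \<bar>conv_powr a Phi p\<bar> powr lam)"
proof -
  define S where "S = (UNIV \<times> {0<..<T} :: ((real^'n) \<times> real) set)"
  define F where "F p = indicator S p *\<^sub>R \<bar>conv_powr a Phi p\<bar> powr lam" for p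
  define J where "J = (\<integral>\<^sup>+\<xi>. ennreal (if norm \<xi> \<le> 1 then 1 else norm (\<xi>::real^'n) powr - (a * lam)) \<partial>lborel)"
  define e where "e = (real CARD('n) - a * lam) / 2"
  obtain K where K: "0 \<le> K" "\<And>(x::real^'n) t. 0 < t \<Longrightarrow> \<bar>conv_powr a Phi (x, t)\<bar> powr lam
      \<le> K * (if norm x \<le> sqrt t then t powr (- (a * lam) / 2) else norm x powr - (a * lam))"
    using conv_powr_Phi_powr_le[OF a lam] by blast
  have "continuous_on S (conv_powr a Phi)"
    by (rule has_derivative_continuous_on, rule has_derivative_at_withinI, rule conv_powr_Phi_has_derivative[OF a])
      (auto simp: S_def)
  moreover have "\<forall>p\<in>S. 0 < conv_powr a Phi p" using conv_powr_Phi_pos[OF _ a] by (auto simp: S_def)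
  ultimately have "continuous_on S (\<lambda>p. \<bar>conv_powr a Phi p\<bar> powr lam)"
    by (auto intro!: continuous_on_powr' continuous_intros)
  then have F_meas: "F \<in> borel_measurable borel"
    unfolding F_def by (rule borel_measurable_continuous_on_indicator[rotated]) (auto simp: S_def intro!: borel_open open_Times)
  have slice: "(\<integral>\<^sup>+x. ennreal (norm (F (x, t))) \<partial>lborel) \<le> ennreal K * J * (ennreal (t powr e) * indicator {0..T} t)"
    for t
  proof (cases "t \<in> {0<..<T}")
    case True
    then have t: "0 < t" by simp
    have "(\<integral>\<^sup>+x. ennreal (norm (F (x, t))) \<partial>lborel)
        \<le> (\<integral>\<^sup>+x. ennreal K * ennreal (if norm x \<le> sqrt t then t powr (- (a * lam) / 2) else norm (x::real^'n) powr - (a * lam)) \<partial>lborel)"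
      using True K by (intro nn_integral_mono) (simp add: F_def S_def ennreal_mult[symmetric] ennreal_leI)
    also have "\<dots> = ennreal K * (ennreal (t powr e) * J)"
      by (simp add: nn_integral_cmult nn_integral_parabolic_profile[OF t] J_def e_def)
    finally show ?thesis using True by (simp add: mult_ac)
  next
    case False
    then show ?thesis by (simp add: F_def S_def)
  qed
  have "pair_sigma_finite (lborel :: (real^'n) measure) (lborel :: real measure)"
    by (simp add: pair_sigma_finite_def lborel.sigma_finite_measure_axioms)
  then have "(\<integral>\<^sup>+p. ennreal (norm (F p)) \<partial>lborel) = (\<integral>\<^sup>+t. (\<integral>\<^sup>+x. ennreal (norm (F (x, t))) \<partial>lborel) \<partial>lborel)"
    unfolding lborel_prod[symmetric]
    by (rule pair_sigma_finite.nn_integral_snd[symmetric]) (use F_meas in \<open>simp add: lborel_prod measurable_lborel2\<close>)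
  also have "\<dots> \<le> (\<integral>\<^sup>+t. ennreal K * J * (ennreal (t powr e) * indicator {0..T} t) \<partial>lborel)"
    by (intro nn_integral_mono slice)
  also have "\<dots> = ennreal K * J * ennreal (T powr (e + 1) / (e + 1))"
    using has_integral_powr_from_0[of e T] b T
    by (simp add: nn_integral_cmult nn_integral_has_integral_lebesgue' e_def)
  also have "\<dots> < \<infinity>"
    using nn_integral_min_one_norm_powr_finite[where 'a = "real^'n", of "a * lam"] b
    by (simp add: J_def ennreal_mult_less_top)
  finally have "integrable lborel F"
    using F_meas by (intro integrableI_bounded) (auto simp: measurable_lborel2)
  then show ?thesis by (simp add: set_integrable_def S_def F_def[abs_def])
qed

theorem theorem5p2:
  fixes lam \<gamma> \<epsilon> :: real
  assumes "lam \<ge> (real CARD('n) + 2) / real CARD('n)"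
    and "0 < \<epsilon>" and "\<epsilon> < 1"
    and "\<gamma> = (real CARD('n) + 2 - \<epsilon>) / (2 * lam)"
  defines "u \<equiv> (\<lambda>(p :: (real^'n) \<times> real). Psi \<gamma> (fst p) (snd p))"
  shows "smooth_on (UNIV \<times> {0<..}) u
    \<and> (\<forall>x t. t > 0 \<longrightarrow> u (x, t) > 0)
    \<and> (\<forall>x t. t > 0 \<longrightarrow> heat_op u (x, t) = 0)
    \<and> (\<forall>T > 0. set_integrable lborel (UNIV \<times> {0<..<T}) (\<lambda>p. \<bar>u p\<bar> powr lam))
    \<and> (\<forall>t > 0. t powr \<gamma> * u (0, t) = u (0, 1))
    \<and> (\<exists>c C. 0 < c \<and> 0 < C \<and>
           (\<forall>x t. t > 0 \<and> norm x < sqrt t \<longrightarrow> c \<le> t powr \<gamma> * u (x, t) \<and> t powr \<gamma> * u (x, t) \<le> C))"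
proof -
  define n where "n = real CARD('n)"
  define a where "a = 2 * \<gamma>"
  have lam: "0 < lam" "n + 2 \<le> lam * n"
    using assms(1) by (auto simp: n_def field_simps order.strict_trans2[OF _ assms(1)])
  have a_lam: "a * lam = n + 2 - \<epsilon>"
    using lam assms(4) by (simp add: a_def n_def)
  have "0 < a * lam" "a * lam < n * lam"
    using a_lam lam assms(2,3) by (auto simp: n_def mult.commute)
  then have a: "0 \<le> a" "a < CARD('n)"
    using lam(1) by (auto simp: n_def zero_less_mult_iff)
  have u: "u = conv_powr a Phi"
    by (auto simp: u_def fun_eq_iff Psi_def conv_powr_def Phi_def a_def)
  have self_similar: "t powr \<gamma> * u (x, t) = u (x /\<^sub>R sqrt t, 1)" if "0 < t" for x t
    using conv_powr_Phi_scale[OF that, of a x] that by (simp add: u a_def powr_minus field_simps)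
  show ?thesis
    unfolding u
    using smooth_on_conv_powr_Phi[OF a] conv_powr_Phi_pos[OF _ a] heat_op_conv_powr_Phi[OF a]
      conv_powr_Phi_powr_set_integrable[OF a lam(1)] self_similar[of _ 0, unfolded u]
      conv_powr_Phi_self_similar_bounds[OF a] a_lam assms(2,3)
    by (simp add: n_def a_def)
qed

end
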